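(* Let $k$ be a field, $A$ a commutative $k$-algebra, $k_n=k[t]/(t^{n+1})$, and $B$ a $k_n$-algebra with an isomorphism $gr\,B\simeq A\otimes_kk_n$. Let $\gamma:gr\,D(B)\to\operatorname{End}_{k_n}(gr\,B)$ be the natural homomorphism. Then (i) $\gamma$ maps $gr\,D(B)$ into $D(gr\,B)$; (ii) the map $\gamma:gr\,D(B)\to D(gr\,B)$ is injective if and only if it is surjective.
   Context: All differential operators are $k[t]$-linear. For a $k_n$-algebra $C$, $D(C)=\bigcup_mD^m(C)$, where $D^m(C)$ is the set of $d\in\operatorname{End}_{k_n}(C)$ with $[f_m,\dots,[f_1,[f_0,d]]\dots]=0$ for all $f_0,\dots,f_m\in C$ (acting by left multiplication, $[f,d]=f\circ d-d\circ f$). $gr$ denotes the associated graded for the filtration by powers of $t$: $gr\,B=\bigoplus_it^iB/t^{i+1}B$ and $gr\,D(B)=\bigoplus_it^iD(B)/t^{i+1}D(B)$. The homomorphism $\gamma$ sends the class of $d\in t^iD(B)$ to the $k_n$-endomorphism of $gr\,B$ mapping $t^jB/t^{j+1}B\to t^{i+j}B/t^{i+j+1}B$ induced by $d$ (composition of the natural map $gr\,D(B)\to gr\,\operatorname{End}_{k_n}(B)$ and the natural isomorphism $gr\,\operatorname{End}_{k_n}(B)\to\operatorname{End}_{k_n}(gr\,B)$). *)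

theory Defs
  imports "HOL-Algebra.Ring" "HOL-Library.FuncSet" "HOL-Library.Function_Algebras"
begin

definition k_algebra_str :: "('k::field \<Rightarrow> 'b::ring_1) \<Rightarrow> bool" where
  "k_algebra_str \<iota> \<longleftrightarrow> \<iota> 0 = 0 \<and> \<iota> 1 = 1 \<and> (\<forall>a b. \<iota> (a + b) = \<iota> a + \<iota> b)
     \<and> (\<forall>a b. \<iota> (a * b) = \<iota> a * \<iota> b) \<and> (\<forall>c x. \<iota> c * x = x * \<iota> c)"

text \<open>A k_n-algebra structure: a ring homomorphism k[t]/(t^(n+1)) into the centre,
  i.e. a k-algebra structure together with the image t of the variable, which is
  central and satisfies t^(n+1) = 0.\<close>
definition kn_algebra_str :: "('k::field \<Rightarrow> 'b::ring_1) \<Rightarrow> 'b \<Rightarrow> nat \<Rightarrow> bool" where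
  "kn_algebra_str \<iota> t n \<longleftrightarrow> k_algebra_str \<iota> \<and> (\<forall>x. t * x = x * t) \<and> t ^ Suc n = 0"

definition type_ring :: "'b::ring_1 ring" where
  "type_ring = \<lparr>carrier = UNIV, mult = (*), one = 1, zero = 0, add = (+)\<rparr>"

definition End_kn :: "('c, 'm) ring_scheme \<Rightarrow> ('k \<Rightarrow> 'c) \<Rightarrow> 'c \<Rightarrow> ('c \<Rightarrow> 'c) set" where
  "End_kn R \<iota> \<tau> = {d. d \<in> carrier R \<rightarrow> carrier R \<and> d \<in> extensional (carrier R)
     \<and> (\<forall>x\<in>carrier R. \<forall>y\<in>carrier R. d (x \<oplus>\<^bsub>R\<^esub> y) = d x \<oplus>\<^bsub>R\<^esub> d y)
     \<and> (\<forall>c. \<forall>x\<in>carrier R. d (\<iota> c \<otimes>\<^bsub>R\<^esub> x) = \<iota> c \<otimes>\<^bsub>R\<^esub> d x)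
     \<and> (\<forall>x\<in>carrier R. d (\<tau> \<otimes>\<^bsub>R\<^esub> x) = \<tau> \<otimes>\<^bsub>R\<^esub> d x)}"

definition lie_comm :: "('c, 'm) ring_scheme \<Rightarrow> 'c \<Rightarrow> ('c \<Rightarrow> 'c) \<Rightarrow> ('c \<Rightarrow> 'c)" where
  "lie_comm R f d = (\<lambda>x\<in>carrier R. (f \<otimes>\<^bsub>R\<^esub> d x) \<ominus>\<^bsub>R\<^esub> d (f \<otimes>\<^bsub>R\<^esub> x))"

definition iter_comm :: "('c, 'm) ring_scheme \<Rightarrow> 'c list \<Rightarrow> ('c \<Rightarrow> 'c) \<Rightarrow> ('c \<Rightarrow> 'c)" where
  "iter_comm R fs d = foldr (lie_comm R) fs d"

definition diff_ops_order :: "('c, 'm) ring_scheme \<Rightarrow> ('k \<Rightarrow> 'c) \<Rightarrow> 'c \<Rightarrow> nat \<Rightarrow> ('c \<Rightarrow> 'c) set" where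
  "diff_ops_order R \<iota> \<tau> m = {d \<in> End_kn R \<iota> \<tau>. \<forall>fs. set fs \<subseteq> carrier R \<longrightarrow> length fs = Suc m
      \<longrightarrow> iter_comm R fs d = (\<lambda>x\<in>carrier R. \<zero>\<^bsub>R\<^esub>)}"

definition diff_ops :: "('c, 'm) ring_scheme \<Rightarrow> ('k \<Rightarrow> 'c) \<Rightarrow> 'c \<Rightarrow> ('c \<Rightarrow> 'c) set" where
  "diff_ops R \<iota> \<tau> = (\<Union>m. diff_ops_order R \<iota> \<tau> m)"

text \<open>Elements of the associated graded of a decreasing filtration F 0 \<supseteq> F 1 \<supseteq> ...:
  sequences whose i-th entry is a coset of F (i+1) inside F i.\<close>
definition gr_pieces :: "(nat \<Rightarrow> 'a::ab_group_add set) \<Rightarrow> (nat \<Rightarrow> 'a set) set" where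
  "gr_pieces F = {g. \<forall>i. \<exists>x\<in>F i. g i = (+) x ` F (Suc i)}"

definition rep :: "'a set \<Rightarrow> 'a" where
  "rep S = (SOME x. x \<in> S)"

definition tpow :: "'b::ring_1 \<Rightarrow> nat \<Rightarrow> 'b set" where
  "tpow t i = range (\<lambda>b. t ^ i * b)"

definition gr_ring :: "'b::ring_1 \<Rightarrow> (nat \<Rightarrow> 'b set) ring" where
  "gr_ring t = \<lparr>carrier = gr_pieces (tpow t),
     mult = (\<lambda>g h m. (+) (\<Sum>i\<le>m. rep (g i) * rep (h (m - i))) ` tpow t (Suc m)),
     one = (\<lambda>i. (+) (if i = 0 then 1 else 0) ` tpow t (Suc i)),
     zero = (\<lambda>i. tpow t (Suc i)),
     add = (\<lambda>g h i. (+) (rep (g i) + rep (h i)) ` tpow t (Suc i))\<rparr>"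

definition gr_scalar :: "('k \<Rightarrow> 'b::ring_1) \<Rightarrow> 'b \<Rightarrow> 'k \<Rightarrow> (nat \<Rightarrow> 'b set)" where
  "gr_scalar \<iota> t c = (\<lambda>i. (+) (if i = 0 then \<iota> c else 0) ` tpow t (Suc i))"

definition gr_t :: "'b::ring_1 \<Rightarrow> (nat \<Rightarrow> 'b set)" where
  "gr_t t = (\<lambda>i. (+) (if i = 1 then t else 0) ` tpow t (Suc i))"

definition filt_D :: "('k::field \<Rightarrow> 'b::ring_1) \<Rightarrow> 'b \<Rightarrow> nat \<Rightarrow> ('b \<Rightarrow> 'b) set" where
  "filt_D \<iota> t i = (\<lambda>d. (\<lambda>x. t ^ i * d x)) ` diff_ops (type_ring :: 'b ring) \<iota> t"

definition gr_D :: "('k::field \<Rightarrow> 'b::ring_1) \<Rightarrow> 'b \<Rightarrow> (nat \<Rightarrow> ('b \<Rightarrow> 'b) set) set" where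
  "gr_D \<iota> t = gr_pieces (filt_D \<iota> t)"

text \<open>gamma: the class of d_i in t^i D(B) acts t^j B/t^(j+1) B \<rightarrow> t^(i+j) B/t^(i+j+1) B
  as induced by d_i; an element of gr D(B) acts by the sum of its components.\<close>
definition gamma :: "'b::ring_1 \<Rightarrow> (nat \<Rightarrow> ('b \<Rightarrow> 'b) set) \<Rightarrow> (nat \<Rightarrow> 'b set) \<Rightarrow> (nat \<Rightarrow> 'b set)" where
  "gamma t G = (\<lambda>g\<in>carrier (gr_ring t).
     \<lambda>m. (+) (\<Sum>i\<le>m. rep (G i) (rep (g (m - i)))) ` tpow t (Suc m))"

section \<open>A \<otimes>_k k_n = A[t]/(t^(n+1))\<close>

definition tensor_kn :: "nat \<Rightarrow> (nat \<Rightarrow> 'a::comm_ring_1) ring" where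
  "tensor_kn n = \<lparr>carrier = {a. \<forall>i>n. a i = 0},
     mult = (\<lambda>a b m. if m \<le> n then (\<Sum>i\<le>m. a i * b (m - i)) else 0),
     one = (\<lambda>i. if i = 0 then 1 else 0),
     zero = (\<lambda>i. 0),
     add = (\<lambda>a b i. a i + b i)\<rparr>"

definition scalar_kn :: "('k \<Rightarrow> 'a::comm_ring_1) \<Rightarrow> 'k \<Rightarrow> (nat \<Rightarrow> 'a)" where
  "scalar_kn \<iota>A c = (\<lambda>i. if i = 0 then \<iota>A c else 0)"

definition t_kn :: "nat \<Rightarrow> (nat \<Rightarrow> 'a::comm_ring_1)" where
  "t_kn n = (\<lambda>i. if i = 1 \<and> 1 \<le> n then 1 else 0)"

definition gr_iso_tensor :: "('k::field \<Rightarrow> 'a::comm_ring_1) \<Rightarrow> ('k \<Rightarrow> 'b::ring_1) \<Rightarrow> 'b \<Rightarrow> nat \<Rightarrow> bool" where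
  "gr_iso_tensor \<iota>A \<iota> t n \<longleftrightarrow> (\<exists>\<psi>. \<psi> \<in> ring_hom (gr_ring t) (tensor_kn n)
     \<and> bij_betw \<psi> (carrier (gr_ring t)) (carrier (tensor_kn n))
     \<and> (\<forall>c. \<psi> (gr_scalar \<iota> t c) = scalar_kn \<iota>A c) \<and> \<psi> (gr_t t) = t_kn n)"

end

(*
  Everything reduces to a saturation property of D(B): every d in D(B) with values in
  tB is of the form t e with e in D(B).

  An element of gr D(B) with components t^i d_i (finitely many of them nonzero, all of
  some common order M) acts on gr B by the convolution x |-> (sum_i t^i d_i x_(m-i))_m.
  Its commutator with a class (a_j)_j is again such a convolution, with components
  sum_j [a_j, t^(q-j) d_(q-j)] of order M - 1; this gives (i).

  For (ii), the isomorphism gr B = A[t]/(t^(n+1)) is only used to see that multiplication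
  by t maps gr_j B injectively into gr_(j+1) B for j < n. If gamma is injective, B is
  saturated: the class in degree 0 of a d with values in tB acts as zero on gr B.
  Conversely, if gamma G = gamma G' with m-th components t^m d and t^m d', flatness shows
  that d - d' has values in tB, so by saturation G and G' agree in degree m. If gamma is
  surjective, an operator d with values in t^k B is congruent modulo t^(k+1) B to some
  t^k e with e in D(B), because d placed in degree k defines an element of D(gr B); by
  descending induction on k, B is saturated. Conversely, for Delta in D(gr B) the maps
  b |-> t^(n-m) (Delta b)_m lie in D(B) and have values in t^n B, so by saturation they
  are t^n e_m; the classes of the t^m e_m form a preimage of Delta, since a k_n-linear
  endomorphism of gr B is determined by its values in degree 0.
*)
theory Submission
  imports Defs HOL.Modules
begin

section \<open>Cosets modulo a filtration by subgroups\<close>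

definition filt_cls :: "(nat \<Rightarrow> 'a::ab_group_add set) \<Rightarrow> (nat \<Rightarrow> 'a) \<Rightarrow> nat \<Rightarrow> 'a set" where
  "filt_cls F x = (\<lambda>i. (+) (x i) ` F (Suc i))"

lemma rep_in: "x \<in> S \<Longrightarrow> rep S \<in> S"
  unfolding rep_def by (rule someI)

locale subgroup_filtration =
  fixes F :: "nat \<Rightarrow> 'a::ab_group_add set"
  assumes zero_mem: "0 \<in> F i"
    and diff_mem: "x \<in> F i \<Longrightarrow> y \<in> F i \<Longrightarrow> x - y \<in> F i"
    and Suc_subset: "F (Suc i) \<subseteq> F i"
begin

lemma add_mem: "x \<in> F i \<Longrightarrow> y \<in> F i \<Longrightarrow> x + y \<in> F i"
  using diff_mem[of x i "0 - y"] diff_mem[OF zero_mem, of y i] by simp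

lemma coset_eq_iff: "(+) x ` F i = (+) y ` F i \<longleftrightarrow> x - y \<in> F i"
proof
  assume "(+) x ` F i = (+) y ` F i"
  moreover have "x \<in> (+) x ` F i" using image_eqI[of x "(+) x" 0] zero_mem by simp
  ultimately show "x - y \<in> F i" by auto
next
  have subset: "(+) u ` F i \<subseteq> (+) v ` F i" if "u - v \<in> F i" for u v
  proof
    fix z assume "z \<in> (+) u ` F i"
    then obtain s where s: "s \<in> F i" "z = u + s" by auto
    then have "z = v + ((u - v) + s)" by simp
    then show "z \<in> (+) v ` F i" using add_mem[OF that s(1)] by blast
  qed
  assume "x - y \<in> F i"
  moreover have "y - x \<in> F i" using diff_mem[OF zero_mem \<open>x - y \<in> F i\<close>] by simp
  ultimately show "(+) x ` F i = (+) y ` F i" using subset by blast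
qed

lemma rep_coset_diff: "rep ((+) x ` F i) - x \<in> F i"
proof -
  have "x \<in> (+) x ` F i" using image_eqI[of x "(+) x" 0] zero_mem by simp
  then have "rep ((+) x ` F i) \<in> (+) x ` F i" by (rule rep_in)
  then show ?thesis by auto
qed

lemma filt_cls_eq_iff: "filt_cls F x = filt_cls F y \<longleftrightarrow> (\<forall>i. x i - y i \<in> F (Suc i))"
  unfolding filt_cls_def fun_eq_iff coset_eq_iff ..

lemma filt_cls_eqI: "(\<And>i. x i - y i \<in> F (Suc i)) \<Longrightarrow> filt_cls F x = filt_cls F y"
  using filt_cls_eq_iff by blast

lemma rep_filt_cls: "rep (filt_cls F x i) - x i \<in> F (Suc i)"
  unfolding filt_cls_def by (rule rep_coset_diff)

lemma filt_cls_in_gr_pieces: "(\<And>i. x i \<in> F i) \<Longrightarrow> filt_cls F x \<in> gr_pieces F"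
  unfolding gr_pieces_def filt_cls_def by blast

lemma gr_pieces_rep:
  assumes "g \<in> gr_pieces F"
  shows "rep (g i) \<in> F i" and "g = filt_cls F (\<lambda>i. rep (g i))"
proof -
  have *: "rep (g i) \<in> F i \<and> filt_cls F (\<lambda>i. rep (g i)) i = g i" for i
  proof -
    obtain x where x: "x \<in> F i" "g i = (+) x ` F (Suc i)"
      using assms unfolding gr_pieces_def by blast
    define y where "y = rep (g i)"
    have y: "y - x \<in> F (Suc i)" unfolding y_def x(2) by (rule rep_coset_diff)
    have "filt_cls F (\<lambda>i. rep (g i)) i = (+) y ` F (Suc i)" unfolding filt_cls_def y_def ..
    also have "\<dots> = g i" unfolding x(2) coset_eq_iff by (rule y)
    finally show ?thesis
      using add_mem[OF subsetD[OF Suc_subset y] x(1)] unfolding y_def by simp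
  qed
  show "rep (g i) \<in> F i" using * by blast
  show "g = filt_cls F (\<lambda>i. rep (g i))" using * by (simp add: fun_eq_iff)
qed

end

lemma sum_atMost_triangle:
  fixes G :: "nat \<Rightarrow> nat \<Rightarrow> 'a::comm_monoid_add"
  shows "(\<Sum>j\<le>m. \<Sum>i\<le>m - j. G j i) = (\<Sum>q\<le>m. \<Sum>j\<le>q. G j (q - j))"
proof -
  have "(\<Sum>j\<le>m. \<Sum>i\<le>m - j. G j i) = (\<Sum>(j, i)\<in>Sigma {..m} (\<lambda>j. {..m - j}). G j i)"
    by (rule sum.Sigma) auto
  also have "Sigma {..m} (\<lambda>j. {..m - j}) = {(j, i). j + i \<le> m}" by auto
  finally show ?thesis by (simp only: sum.triangle_reindex_eq)
qed

lemma sum_atMost_reflect: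
  fixes H :: "nat \<Rightarrow> nat \<Rightarrow> 'a::comm_monoid_add"
  shows "(\<Sum>i\<le>q. H i (q - i)) = (\<Sum>j\<le>q. H (q - j) j)"
  by (rule sum.reindex_bij_witness[where i="\<lambda>j. q - j" and j="\<lambda>i. q - i"]) auto

definition bracket :: "'b::ring_1 \<Rightarrow> ('b \<Rightarrow> 'b) \<Rightarrow> 'b \<Rightarrow> 'b" where
  "bracket f d = (\<lambda>x. f * d x - d (f * x))"

lemma bracket_0: "bracket f 0 = 0"
  unfolding bracket_def by (simp add: fun_eq_iff)

lemma bracket_add: "bracket f (d + e) = bracket f d + bracket f e"
  unfolding bracket_def by (simp add: fun_eq_iff algebra_simps)

lemma bracket_minus: "bracket f (- d) = - bracket f d"
  unfolding bracket_def by (simp add: fun_eq_iff algebra_simps)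

lemma bracket_scale_central:
  assumes "\<And>y. c * y = y * c"
  shows "bracket f (\<lambda>x. c * d x) = (\<lambda>x. c * bracket f d x)"
proof -
  have "f * (c * y) = c * (f * y)" for y
    by (simp only: mult.assoc[symmetric] assms[of f, symmetric])
  then show ?thesis unfolding bracket_def by (simp add: right_diff_distrib)
qed

lemma foldr_bracket_0: "foldr bracket fs 0 = 0"
  by (induction fs) (simp_all only: foldr_Cons foldr_Nil o_apply id_apply bracket_0)

lemma foldr_bracket_add: "foldr bracket fs (d + e) = foldr bracket fs d + foldr bracket fs e"
  by (induction fs) (simp_all only: foldr_Cons foldr_Nil o_apply id_apply bracket_add)

lemma foldr_bracket_minus: "foldr bracket fs (- d) = - foldr bracket fs d"
  by (induction fs) (simp_all only: foldr_Cons foldr_Nil o_apply id_apply bracket_minus)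

lemma foldr_bracket_scale_central:
  assumes "\<And>y. c * y = y * c"
  shows "foldr bracket fs (\<lambda>x. c * d x) = (\<lambda>x. c * foldr bracket fs d x)"
  by (induction fs) (simp_all add: bracket_scale_central[OF assms])

lemma type_ring_simps [simp]:
  "carrier (type_ring :: 'b::ring_1 ring) = UNIV"
  "mult (type_ring :: 'b ring) = (*)"
  "add (type_ring :: 'b ring) = (+)"
  "zero (type_ring :: 'b ring) = 0"
  by (simp_all add: type_ring_def)

lemma type_ring_minus: "x \<ominus>\<^bsub>type_ring :: 'b::ring_1 ring\<^esub> y = x - y"
proof -
  have "\<ominus>\<^bsub>type_ring :: 'b ring\<^esub> y = - y"
    unfolding a_inv_def m_inv_def by (rule the_equality) (auto simp: eq_neg_iff_add_eq_0)
  then show ?thesis by (simp add: a_minus_def)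
qed

lemma iter_comm_type_ring: "iter_comm (type_ring :: 'b::ring_1 ring) fs d = foldr bracket fs d"
proof -
  have "lie_comm (type_ring :: 'b ring) f e = bracket f e" for f e
    unfolding lie_comm_def bracket_def by (simp add: type_ring_minus restrict_UNIV)
  then show ?thesis unfolding iter_comm_def by (induction fs) simp_all
qed

lemma iter_comm_snoc: "iter_comm S (fs @ [f]) \<Phi> = iter_comm S fs (lie_comm S f \<Phi>)"
  unfolding iter_comm_def by simp

lemma End_kn_closed: "\<Phi> \<in> End_kn S \<sigma> \<tau> \<Longrightarrow> g \<in> carrier S \<Longrightarrow> \<Phi> g \<in> carrier S"
  unfolding End_kn_def by blast

lemma End_kn_add:
  "\<Phi> \<in> End_kn S \<sigma> \<tau> \<Longrightarrow> g \<in> carrier S \<Longrightarrow> h \<in> carrier S \<Longrightarrow> \<Phi> (g \<oplus>\<^bsub>S\<^esub> h) = \<Phi> g \<oplus>\<^bsub>S\<^esub> \<Phi> h"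
  unfolding End_kn_def by blast

lemma End_kn_scalar: "\<Phi> \<in> End_kn S \<sigma> \<tau> \<Longrightarrow> g \<in> carrier S \<Longrightarrow> \<Phi> (\<sigma> c \<otimes>\<^bsub>S\<^esub> g) = \<sigma> c \<otimes>\<^bsub>S\<^esub> \<Phi> g"
  unfolding End_kn_def by blast

lemma End_kn_mult_tau: "\<Phi> \<in> End_kn S \<sigma> \<tau> \<Longrightarrow> g \<in> carrier S \<Longrightarrow> \<Phi> (\<tau> \<otimes>\<^bsub>S\<^esub> g) = \<tau> \<otimes>\<^bsub>S\<^esub> \<Phi> g"
  unfolding End_kn_def by blast

lemma End_kn_extensional: "\<Phi> \<in> End_kn S \<sigma> \<tau> \<Longrightarrow> \<Phi> \<in> extensional (carrier S)"
  unfolding End_kn_def by blast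

section \<open>The t-adic filtration of a k_n-algebra\<close>

locale kn_algebra =
  fixes \<iota> :: "'k::field \<Rightarrow> 'b::ring_1" and t :: 'b and n :: nat
  assumes kn_algebra: "kn_algebra_str \<iota> t n"
begin

lemma t_central: "t * x = x * t"
  using kn_algebra unfolding kn_algebra_str_def by auto

lemma t_power_central: "t ^ i * x = x * t ^ i"
  by (rule power_commuting_commutes) (simp add: t_central)

lemma \<iota>_central: "\<iota> c * x = x * \<iota> c"
  using kn_algebra unfolding kn_algebra_str_def k_algebra_str_def by auto

lemma t_power_left_commute: "y * (t ^ i * x) = t ^ i * (y * x)"
  by (simp only: mult.assoc[symmetric] t_power_central[of _ y, symmetric])

lemma t_left_commute: "y * (t * x) = t * (y * x)"
  using t_power_left_commute[of y 1] by simp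

lemma \<iota>_left_commute: "y * (\<iota> c * x) = \<iota> c * (y * x)"
  by (simp only: mult.assoc[symmetric] \<iota>_central[of c y, symmetric])

lemma t_power_eq_0: "n < i \<Longrightarrow> t ^ i = 0"
proof -
  assume "n < i"
  then have "t ^ i = t ^ Suc n * t ^ (i - Suc n)" by (simp only: power_add[symmetric]) simp
  moreover have "t ^ Suc n = 0" using kn_algebra unfolding kn_algebra_str_def by blast
  ultimately show ?thesis by (metis mult_zero_left)
qed

abbreviation T :: "nat \<Rightarrow> 'b set" where
  "T i \<equiv> tpow t i"

lemma mem_T_iff: "x \<in> T i \<longleftrightarrow> (\<exists>b. x = t ^ i * b)"
  unfolding tpow_def by auto

lemma T_I: "t ^ i * b \<in> T i"
  unfolding mem_T_iff by auto

lemma t_power_in_T: "t ^ i \<in> T i"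
  using T_I[of i 1] by simp

lemma T_0 [simp]: "x \<in> T 0"
  unfolding mem_T_iff by simp

lemma zero_in_T [simp]: "0 \<in> T i"
  using T_I[of i 0] by simp

lemma T_eq_0_iff: "n < i \<Longrightarrow> x \<in> T i \<longleftrightarrow> x = 0"
  unfolding mem_T_iff using t_power_eq_0 by auto

lemma T_add: "x \<in> T i \<Longrightarrow> y \<in> T i \<Longrightarrow> x + y \<in> T i"
  unfolding mem_T_iff by (auto simp flip: distrib_left)

lemma T_minus: "x \<in> T i \<Longrightarrow> - x \<in> T i"
proof -
  assume "x \<in> T i"
  then obtain a where "x = t ^ i * a" unfolding mem_T_iff by blast
  then have "- x = t ^ i * (- a)" by simp
  then show ?thesis unfolding mem_T_iff by blast
qed

lemma T_diff: "x \<in> T i \<Longrightarrow> y \<in> T i \<Longrightarrow> x - y \<in> T i"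
  using T_add[of x i "- y"] T_minus[of y i] by simp

lemma T_sum: "(\<And>x. x \<in> S \<Longrightarrow> f x \<in> T i) \<Longrightarrow> sum f S \<in> T i"
  by (induction S rule: infinite_finite_induct) (auto intro: T_add)

lemma T_mult_left: "x \<in> T i \<Longrightarrow> y * x \<in> T i"
  unfolding mem_T_iff by (auto simp: t_power_left_commute)

lemma T_mult_right: "x \<in> T i \<Longrightarrow> x * y \<in> T i"
  unfolding mem_T_iff by (auto simp: mult.assoc)

lemma T_mult: "x \<in> T i \<Longrightarrow> y \<in> T j \<Longrightarrow> x * y \<in> T (i + j)"
proof -
  assume "x \<in> T i" "y \<in> T j"
  then obtain a b where "x = t ^ i * a" "y = t ^ j * b" unfolding mem_T_iff by blast
  then have "x * y = t ^ (i + j) * (a * b)"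
    by (simp only: mult.assoc t_power_left_commute[of a j b] power_add)
  then show ?thesis unfolding mem_T_iff by blast
qed

lemma T_mult_t_power: "x \<in> T i \<Longrightarrow> t ^ j * x \<in> T (j + i)"
  using T_mult[OF T_I[of j 1]] by simp

lemma T_mult_t: "x \<in> T i \<Longrightarrow> t * x \<in> T (Suc i)"
  using T_mult_t_power[of x i 1] by simp

lemma T_antimono: "i \<le> j \<Longrightarrow> x \<in> T j \<Longrightarrow> x \<in> T i"
proof -
  assume "i \<le> j" "x \<in> T j"
  then obtain k b where "j = i + k" "x = t ^ j * b" unfolding mem_T_iff by (auto dest: le_Suc_ex)
  then have "x = t ^ i * (t ^ k * b)" by (simp add: power_add mult.assoc)
  then show ?thesis unfolding mem_T_iff by blast
qed

lemma T_SucD: "x \<in> T (Suc i) \<Longrightarrow> x \<in> T i"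
  by (rule T_antimono[of i "Suc i"]) auto

lemma T_Suc_annihilated: "m \<le> n \<Longrightarrow> w \<in> T (Suc m) \<Longrightarrow> t ^ (n - m) * w = 0"
  using T_mult_t_power[of w "Suc m" "n - m"] T_eq_0_iff[of "n - m + Suc m"] by simp

lemma T_Suc_annihilated_eq:
  "m \<le> n \<Longrightarrow> u - v \<in> T (Suc m) \<Longrightarrow> t ^ (n - m) * u = t ^ (n - m) * v"
  using T_Suc_annihilated[of m "u - v"] by (simp add: right_diff_distrib)

lemma T_mult_congruence:
  assumes "a \<in> T i" "a - a' \<in> T (Suc i)" "b' \<in> T j" "b - b' \<in> T (Suc j)"
  shows "a * b - a' * b' \<in> T (Suc (i + j))"
proof -
  have "a * (b - b') \<in> T (Suc (i + j))" using T_mult[OF assms(1,4)] by simp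
  moreover have "(a - a') * b' \<in> T (Suc (i + j))" using T_mult[OF assms(2,3)] by simp
  moreover have "a * b - a' * b' = a * (b - b') + (a - a') * b'" by (simp add: algebra_simps)
  ultimately show ?thesis using T_add by simp
qed

definition kn_linear :: "('b \<Rightarrow> 'b) \<Rightarrow> bool" where
  "kn_linear d \<longleftrightarrow> additive d \<and> (\<forall>c x. d (\<iota> c * x) = \<iota> c * d x) \<and> (\<forall>x. d (t * x) = t * d x)"

definition Diff :: "nat \<Rightarrow> ('b \<Rightarrow> 'b) set" where
  "Diff m = {d. kn_linear d \<and> (\<forall>fs. length fs = Suc m \<longrightarrow> foldr bracket fs d = 0)}"

definition Diff_ops :: "('b \<Rightarrow> 'b) set" where
  "Diff_ops = (\<Union>m. Diff m)"

lemma diff_ops_order_type_ring: "diff_ops_order (type_ring :: 'b ring) \<iota> t m = Diff m"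
  unfolding diff_ops_order_def Diff_def End_kn_def kn_linear_def additive_def iter_comm_type_ring
  by (auto simp: extensional_def zero_fun_def restrict_UNIV)

lemma diff_ops_type_ring: "diff_ops (type_ring :: 'b ring) \<iota> t = Diff_ops"
  unfolding diff_ops_def Diff_ops_def diff_ops_order_type_ring ..

lemma kn_linear_additive: "kn_linear d \<Longrightarrow> additive d"
  unfolding kn_linear_def by blast

lemma kn_linear_scalar: "kn_linear d \<Longrightarrow> d (\<iota> c * x) = \<iota> c * d x"
  unfolding kn_linear_def by blast

lemma kn_linear_t: "kn_linear d \<Longrightarrow> d (t * x) = t * d x"
  unfolding kn_linear_def by blast

lemmas kn_linear_add = additive.add[OF kn_linear_additive]
  and kn_linear_0 = additive.zero[OF kn_linear_additive]
  and kn_linear_diff = additive.diff[OF kn_linear_additive]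
  and kn_linear_sum = additive.sum[OF kn_linear_additive]

lemma kn_linear_t_power: "kn_linear d \<Longrightarrow> d (t ^ k * x) = t ^ k * d x"
  by (induction k) (simp_all add: mult.assoc kn_linear_t)

lemma kn_linear_T:
  assumes "kn_linear d" and "\<And>y. d y \<in> T i" and "x \<in> T j"
  shows "d x \<in> T (j + i)"
proof -
  obtain b where "x = t ^ j * b" using assms(3) unfolding mem_T_iff by blast
  then show ?thesis using kn_linear_t_power[OF assms(1)] T_mult_t_power[OF assms(2)] by simp
qed

lemma kn_linear_0_fun: "kn_linear 0"
  unfolding kn_linear_def additive_def by simp

lemma kn_linear_add_fun: "kn_linear d \<Longrightarrow> kn_linear e \<Longrightarrow> kn_linear (d + e)"
  unfolding kn_linear_def additive_def by (simp add: algebra_simps)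

lemma kn_linear_minus_fun: "kn_linear d \<Longrightarrow> kn_linear (- d)"
  unfolding kn_linear_def additive_def by (simp add: algebra_simps)

lemma kn_linear_sum_fun: "(\<And>j. j \<in> S \<Longrightarrow> kn_linear (f j)) \<Longrightarrow> kn_linear (\<lambda>y. \<Sum>j\<in>S. f j y)"
proof (induction S rule: infinite_finite_induct)
  case (insert a S)
  then have "(\<lambda>y. \<Sum>j\<in>insert a S. f j y) = f a + (\<lambda>y. \<Sum>j\<in>S. f j y)" by (simp add: fun_eq_iff)
  then show ?case using insert by (simp add: kn_linear_add_fun)
qed (simp_all add: kn_linear_0_fun[unfolded zero_fun_def])

lemma kn_linear_scale_t_power: "kn_linear d \<Longrightarrow> kn_linear (\<lambda>x. t ^ k * d x)"
  unfolding kn_linear_def additive_def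
  by (simp add: distrib_left t_power_left_commute[of "\<iota> _"] t_power_left_commute[of t])

lemma kn_linear_bracket: "kn_linear d \<Longrightarrow> kn_linear (bracket f d)"
proof -
  assume d: "kn_linear d"
  have "bracket f d (x + y) = bracket f d x + bracket f d y" for x y
    unfolding bracket_def using kn_linear_add[OF d] by (simp add: distrib_left)
  moreover have "bracket f d (\<iota> c * x) = \<iota> c * bracket f d x" for c x
    unfolding bracket_def using kn_linear_scalar[OF d]
    by (simp add: right_diff_distrib \<iota>_left_commute[of f] \<iota>_left_commute[of _ c x])
  moreover have "bracket f d (t * x) = t * bracket f d x" for x
    unfolding bracket_def using kn_linear_t[OF d]
    by (simp add: right_diff_distrib t_left_commute[of f] t_left_commute[of _ x])
  ultimately show ?thesis unfolding kn_linear_def additive_def by blast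
qed

lemma Diff_kn_linear: "d \<in> Diff m \<Longrightarrow> kn_linear d"
  unfolding Diff_def by blast

lemma zero_in_Diff: "0 \<in> Diff m"
  unfolding Diff_def by (simp add: kn_linear_0_fun foldr_bracket_0)

lemma Diff_add: "d \<in> Diff m \<Longrightarrow> e \<in> Diff m \<Longrightarrow> d + e \<in> Diff m"
  unfolding Diff_def by (simp add: kn_linear_add_fun foldr_bracket_add)

lemma Diff_minus: "d \<in> Diff m \<Longrightarrow> - d \<in> Diff m"
  unfolding Diff_def by (simp add: kn_linear_minus_fun foldr_bracket_minus)

lemma Diff_sum: "(\<And>i. i \<in> S \<Longrightarrow> f i \<in> Diff m) \<Longrightarrow> (\<lambda>x. \<Sum>i\<in>S. f i x) \<in> Diff m"
proof (induction S rule: infinite_finite_induct)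
  case (insert a S)
  then have "(\<lambda>x. \<Sum>i\<in>insert a S. f i x) = f a + (\<lambda>x. \<Sum>i\<in>S. f i x)" by (simp add: fun_eq_iff)
  then show ?case using insert by (simp add: Diff_add)
qed (simp_all add: zero_in_Diff[unfolded zero_fun_def])

lemma Diff_scale_t_power: "d \<in> Diff m \<Longrightarrow> (\<lambda>x. t ^ k * d x) \<in> Diff m"
  unfolding Diff_def
  by (simp add: kn_linear_scale_t_power foldr_bracket_scale_central[OF t_power_central] zero_fun_def)

lemma Diff_0_bracket: "d \<in> Diff 0 \<Longrightarrow> bracket f d = 0"
  unfolding Diff_def by (auto elim!: allE[of _ "[f]"])

lemma Diff_Suc_bracket: "d \<in> Diff (Suc m) \<Longrightarrow> bracket f d \<in> Diff m"
proof -
  assume d: "d \<in> Diff (Suc m)"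
  have "foldr bracket fs (bracket f d) = 0" if "length fs = Suc m" for fs
  proof -
    have "length (fs @ [f]) = Suc (Suc m)" using that by simp
    then have "foldr bracket (fs @ [f]) d = 0" using d unfolding Diff_def by blast
    then show ?thesis by simp
  qed
  then show ?thesis using d kn_linear_bracket unfolding Diff_def by blast
qed

lemma Diff_Suc: "d \<in> Diff m \<Longrightarrow> d \<in> Diff (Suc m)"
proof -
  assume d: "d \<in> Diff m"
  have "foldr bracket fs d = 0" if len: "length fs = Suc (Suc m)" for fs
  proof -
    obtain f fs' where "fs = f # fs'" "length fs' = Suc m" using len length_Suc_conv[of fs] by blast
    then show ?thesis using d bracket_0 unfolding Diff_def by auto
  qed
  then show ?thesis using d unfolding Diff_def by blast
qed

lemma Diff_mono: "m \<le> m' \<Longrightarrow> d \<in> Diff m \<Longrightarrow> d \<in> Diff m'"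
  by (induction m' rule: dec_induct) (auto intro: Diff_Suc)

lemma Diff_ops_iff: "d \<in> Diff_ops \<longleftrightarrow> (\<exists>m. d \<in> Diff m)"
  unfolding Diff_ops_def by blast

lemma Diff_ops_kn_linear: "d \<in> Diff_ops \<Longrightarrow> kn_linear d"
  unfolding Diff_ops_iff by (auto intro: Diff_kn_linear)

lemma zero_in_Diff_ops: "0 \<in> Diff_ops"
  unfolding Diff_ops_iff using zero_in_Diff by blast

lemma Diff_ops_add: "d \<in> Diff_ops \<Longrightarrow> e \<in> Diff_ops \<Longrightarrow> d + e \<in> Diff_ops"
proof -
  assume "d \<in> Diff_ops" "e \<in> Diff_ops"
  then obtain m m' where "d \<in> Diff m" "e \<in> Diff m'" unfolding Diff_ops_iff by blast
  then have "d + e \<in> Diff (max m m')" by (intro Diff_add) (auto elim: Diff_mono[rotated])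
  then show ?thesis unfolding Diff_ops_iff by blast
qed

lemma Diff_ops_minus: "d \<in> Diff_ops \<Longrightarrow> - d \<in> Diff_ops"
  unfolding Diff_ops_iff by (auto intro: Diff_minus)

lemma Diff_ops_diff: "d \<in> Diff_ops \<Longrightarrow> e \<in> Diff_ops \<Longrightarrow> d - e \<in> Diff_ops"
  using Diff_ops_add[of d "- e"] Diff_ops_minus[of e] by simp

lemma Diff_ops_scale_t_power: "d \<in> Diff_ops \<Longrightarrow> (\<lambda>x. t ^ k * d x) \<in> Diff_ops"
  unfolding Diff_ops_iff by (auto intro: Diff_scale_t_power)

lemma Diff_ops_common_order:
  fixes N :: nat
  assumes "\<And>i. i \<le> N \<Longrightarrow> f i \<in> Diff_ops"
  obtains M where "\<And>i. i \<le> N \<Longrightarrow> f i \<in> Diff M"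
proof -
  obtain ord where ord: "\<And>i. i \<le> N \<Longrightarrow> f i \<in> Diff (ord i)"
    using assms unfolding Diff_ops_iff by metis
  have "f i \<in> Diff (Max (ord ` {..N}))" if "i \<le> N" for i
  proof (rule Diff_mono[OF _ ord[OF that]])
    show "ord i \<le> Max (ord ` {..N})" using that by (intro Max_ge finite_imageI) auto
  qed
  then show ?thesis by (rule that)
qed

subsection \<open>The associated graded ring gr B\<close>

abbreviation R :: "(nat \<Rightarrow> 'b set) ring" where
  "R \<equiv> gr_ring t"

sublocale T: subgroup_filtration "tpow t"
  by unfold_locales (auto intro: T_diff T_SucD)

abbreviation gr_cls :: "(nat \<Rightarrow> 'b) \<Rightarrow> nat \<Rightarrow> 'b set" where
  "gr_cls \<equiv> filt_cls (tpow t)"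

definition graded :: "(nat \<Rightarrow> 'b) \<Rightarrow> bool" where
  "graded x \<longleftrightarrow> (\<forall>i. x i \<in> T i)"

definition gr_single :: "nat \<Rightarrow> 'b \<Rightarrow> nat \<Rightarrow> 'b set" where
  "gr_single k b = gr_cls (\<lambda>i. if i = k then b else 0)"

lemma gr_carrier: "carrier R = gr_pieces (tpow t)"
  by (simp add: gr_ring_def)

lemmas gr_cls_eq_iff = T.filt_cls_eq_iff
  and gr_cls_eqI = T.filt_cls_eqI
  and rep_gr_cls = T.rep_filt_cls

lemma gr_cls_in_carrier: "graded x \<Longrightarrow> gr_cls x \<in> carrier R"
  unfolding gr_carrier graded_def by (rule T.filt_cls_in_gr_pieces) blast

lemma gr_carrier_rep:
  assumes "g \<in> carrier R"
  shows "graded (\<lambda>i. rep (g i))" and "g = gr_cls (\<lambda>i. rep (g i))"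
  using T.gr_pieces_rep assms unfolding gr_carrier graded_def by blast+

lemma gr_carrierE:
  assumes "g \<in> carrier R"
  obtains x where "graded x" and "g = gr_cls x"
  using gr_carrier_rep[OF assms] by blast

lemma graded_rep_gr_cls: "graded x \<Longrightarrow> graded (\<lambda>i. rep (gr_cls x i))"
  by (rule gr_carrier_rep(1)[OF gr_cls_in_carrier])

lemma graded_0: "graded (\<lambda>_. 0)"
  unfolding graded_def by simp

lemma graded_add: "graded x \<Longrightarrow> graded y \<Longrightarrow> graded (\<lambda>i. x i + y i)"
  unfolding graded_def by (auto intro: T_add)

lemma graded_diff: "graded x \<Longrightarrow> graded y \<Longrightarrow> graded (\<lambda>i. x i - y i)"
  unfolding graded_def by (auto intro: T_diff)

lemma graded_scalar: "graded x \<Longrightarrow> graded (\<lambda>i. a * x i)"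
  unfolding graded_def by (auto intro: T_mult_left)

lemma graded_single: "b \<in> T k \<Longrightarrow> graded (\<lambda>i. if i = k then b else 0)"
  unfolding graded_def by simp

lemma graded_conv: "graded x \<Longrightarrow> graded y \<Longrightarrow> graded (\<lambda>m. \<Sum>i\<le>m. x i * y (m - i))"
proof -
  assume x: "graded x" and y: "graded y"
  have "x i * y (m - i) \<in> T m" if "i \<le> m" for i m
    using T_mult[of "x i" i "y (m - i)" "m - i"] x y that unfolding graded_def by simp
  then show ?thesis unfolding graded_def by (auto intro: T_sum)
qed

lemma gr_zero: "\<zero>\<^bsub>R\<^esub> = gr_cls (\<lambda>_. 0)"
  unfolding filt_cls_def by (simp add: gr_ring_def)

lemma gr_zero_in_carrier: "\<zero>\<^bsub>R\<^esub> \<in> carrier R"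
  unfolding gr_zero by (rule gr_cls_in_carrier[OF graded_0])

lemma gr_add: "gr_cls x \<oplus>\<^bsub>R\<^esub> gr_cls y = gr_cls (\<lambda>i. x i + y i)"
proof -
  have "gr_cls x \<oplus>\<^bsub>R\<^esub> gr_cls y = gr_cls (\<lambda>i. rep (gr_cls x i) + rep (gr_cls y i))"
    by (simp add: gr_ring_def filt_cls_def)
  also have "\<dots> = gr_cls (\<lambda>i. x i + y i)"
  proof (rule gr_cls_eqI)
    fix i
    have eq: "rep (gr_cls x i) + rep (gr_cls y i) - (x i + y i)
        = (rep (gr_cls x i) - x i) + (rep (gr_cls y i) - y i)" by simp
    show "rep (gr_cls x i) + rep (gr_cls y i) - (x i + y i) \<in> T (Suc i)"
      unfolding eq by (rule T_add[OF rep_gr_cls rep_gr_cls])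
  qed
  finally show ?thesis .
qed

lemma gr_mult:
  assumes x: "graded x" and y: "graded y"
  shows "gr_cls x \<otimes>\<^bsub>R\<^esub> gr_cls y = gr_cls (\<lambda>m. \<Sum>i\<le>m. x i * y (m - i))"
proof -
  let ?x' = "\<lambda>i. rep (gr_cls x i)" and ?y' = "\<lambda>i. rep (gr_cls y i)"
  have "gr_cls x \<otimes>\<^bsub>R\<^esub> gr_cls y = gr_cls (\<lambda>m. \<Sum>i\<le>m. ?x' i * ?y' (m - i))"
    by (simp add: gr_ring_def filt_cls_def)
  also have "\<dots> = gr_cls (\<lambda>m. \<Sum>i\<le>m. x i * y (m - i))"
  proof (rule gr_cls_eqI)
    fix m
    have "?x' i * ?y' (m - i) - x i * y (m - i) \<in> T (Suc m)" if "i \<le> m" for i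
    proof -
      have "?x' i * ?y' (m - i) - x i * y (m - i) \<in> T (Suc (i + (m - i)))"
        by (rule T_mult_congruence[OF _ rep_gr_cls _ rep_gr_cls])
          (use graded_rep_gr_cls[OF x] y in \<open>simp_all add: graded_def\<close>)
      then show ?thesis using that by simp
    qed
    then show "(\<Sum>i\<le>m. ?x' i * ?y' (m - i)) - (\<Sum>i\<le>m. x i * y (m - i)) \<in> T (Suc m)"
      by (simp only: sum_subtractf[symmetric]) (rule T_sum, simp)
  qed
  finally show ?thesis .
qed

lemma gr_minus:
  assumes y: "graded y"
  shows "gr_cls x \<ominus>\<^bsub>R\<^esub> gr_cls y = gr_cls (\<lambda>i. x i - y i)"
proof -
  have "\<ominus>\<^bsub>R\<^esub> gr_cls y = gr_cls (\<lambda>i. - y i)"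
    unfolding a_inv_def m_inv_def
  proof (rule the_equality)
    show "gr_cls (\<lambda>i. - y i) \<in> carrier (add_monoid R) \<and>
        gr_cls y \<otimes>\<^bsub>add_monoid R\<^esub> gr_cls (\<lambda>i. - y i) = \<one>\<^bsub>add_monoid R\<^esub> \<and>
        gr_cls (\<lambda>i. - y i) \<otimes>\<^bsub>add_monoid R\<^esub> gr_cls y = \<one>\<^bsub>add_monoid R\<^esub>"
      using gr_cls_in_carrier[OF graded_diff[OF graded_0 y]] by (simp add: gr_add gr_zero)
  next
    fix z
    assume "z \<in> carrier (add_monoid R) \<and>
        gr_cls y \<otimes>\<^bsub>add_monoid R\<^esub> z = \<one>\<^bsub>add_monoid R\<^esub> \<and>
        z \<otimes>\<^bsub>add_monoid R\<^esub> gr_cls y = \<one>\<^bsub>add_monoid R\<^esub>"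
    then have z: "z \<in> carrier R" "gr_cls y \<oplus>\<^bsub>R\<^esub> z = \<zero>\<^bsub>R\<^esub>" by simp_all
    then have "gr_cls (\<lambda>i. y i + rep (z i)) = gr_cls (\<lambda>_. 0)"
      using gr_add[of y "\<lambda>i. rep (z i)", folded gr_carrier_rep(2)[OF z(1)]] by (simp add: gr_zero)
    then have "gr_cls (\<lambda>i. rep (z i)) = gr_cls (\<lambda>i. - y i)"
      unfolding gr_cls_eq_iff by (simp add: add.commute)
    then show "z = gr_cls (\<lambda>i. - y i)" using gr_carrier_rep(2)[OF z(1)] by simp
  qed
  then show ?thesis unfolding a_minus_def by (simp add: gr_add)
qed

lemma gr_mult_closed: "g \<in> carrier R \<Longrightarrow> h \<in> carrier R \<Longrightarrow> g \<otimes>\<^bsub>R\<^esub> h \<in> carrier R"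
  by (elim gr_carrierE) (simp add: gr_mult gr_cls_in_carrier graded_conv)

lemma gr_minus_closed: "g \<in> carrier R \<Longrightarrow> h \<in> carrier R \<Longrightarrow> g \<ominus>\<^bsub>R\<^esub> h \<in> carrier R"
  by (elim gr_carrierE) (simp add: gr_minus gr_cls_in_carrier graded_diff)

lemma gr_single_in_carrier: "b \<in> T k \<Longrightarrow> gr_single k b \<in> carrier R"
  unfolding gr_single_def by (rule gr_cls_in_carrier[OF graded_single])

lemma gr_scalar_eq_single: "gr_scalar \<iota> t c = gr_single 0 (\<iota> c)"
  unfolding gr_scalar_def gr_single_def filt_cls_def by simp

lemma gr_t_eq_single: "gr_t t = gr_single 1 t"
  unfolding gr_t_def gr_single_def filt_cls_def by simp

lemma gr_single_mult:
  assumes "a \<in> T k" and "graded x"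
  shows "gr_single k a \<otimes>\<^bsub>R\<^esub> gr_cls x = gr_cls (\<lambda>m. if k \<le> m then a * x (m - k) else 0)"
proof -
  have "(\<Sum>i\<le>m. (if i = k then a else 0) * x (m - i)) = (if k \<le> m then a * x (m - k) else 0)" for m
    by (simp add: if_distrib[of "\<lambda>u. u * _"] sum.delta cong: if_cong)
  then show ?thesis
    unfolding gr_single_def by (simp add: gr_mult[OF graded_single[OF assms(1)] assms(2)])
qed

lemma gr_single_0_mult: "graded x \<Longrightarrow> gr_single 0 a \<otimes>\<^bsub>R\<^esub> gr_cls x = gr_cls (\<lambda>m. a * x m)"
  using gr_single_mult[of a 0 x] by simp

lemma graded_shift_t: "graded x \<Longrightarrow> graded (\<lambda>m. if m = 0 then 0 else t * x (m - 1))"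
  unfolding graded_def using T_mult_t by (simp split: nat_diff_split)

lemma gr_t_mult: "graded x \<Longrightarrow> gr_t t \<otimes>\<^bsub>R\<^esub> gr_cls x = gr_cls (\<lambda>m. if m = 0 then 0 else t * x (m - 1))"
proof -
  assume x: "graded x"
  have "gr_t t \<otimes>\<^bsub>R\<^esub> gr_cls x = gr_cls (\<lambda>m. if 1 \<le> m then t * x (m - 1) else 0)"
    unfolding gr_t_eq_single using gr_single_mult[OF _ x, of t 1] t_power_in_T[of 1] by simp
  also have "(\<lambda>m. if 1 \<le> m then t * x (m - 1) else 0) = (\<lambda>m. if m = 0 then 0 else t * x (m - 1))"
    by auto
  finally show ?thesis .
qed

lemma gr_single_add: "gr_single k (a + b) = gr_single k a \<oplus>\<^bsub>R\<^esub> gr_single k b"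
  unfolding gr_single_def gr_add by (rule arg_cong[of _ _ gr_cls]) auto

lemma gr_single_0_mult_single: "gr_single 0 a \<otimes>\<^bsub>R\<^esub> gr_single 0 b = gr_single 0 (a * b)"
  unfolding gr_single_def[of 0 b] gr_single_0_mult[OF graded_single[OF T_0]]
  by (simp add: gr_single_def if_distrib[of "\<lambda>u. a * u"] cong: if_cong)

lemma gr_t_in_carrier: "gr_t t \<in> carrier R"
  unfolding gr_t_eq_single using gr_single_in_carrier T_I[of 1 1] by simp

lemma gr_t_mult_single: "b \<in> T k \<Longrightarrow> gr_t t \<otimes>\<^bsub>R\<^esub> gr_single k b = gr_single (Suc k) (t * b)"
  unfolding gr_single_def[of k b] gr_single_def[of "Suc k"]
  by (simp add: gr_t_mult graded_single) (intro arg_cong[of _ _ gr_cls] ext, auto)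

lemma End_kn_gr_zero:
  assumes \<Phi>: "\<Phi> \<in> End_kn R \<sigma> \<tau>"
  shows "\<Phi> \<zero>\<^bsub>R\<^esub> = \<zero>\<^bsub>R\<^esub>"
proof -
  obtain z where z: "graded z" "\<Phi> \<zero>\<^bsub>R\<^esub> = gr_cls z"
    using End_kn_closed[OF \<Phi> gr_zero_in_carrier] by (rule gr_carrierE)
  have "\<zero>\<^bsub>R\<^esub> \<oplus>\<^bsub>R\<^esub> \<zero>\<^bsub>R\<^esub> = \<zero>\<^bsub>R\<^esub>" unfolding gr_zero gr_add by simp
  then have "gr_cls z = gr_cls (\<lambda>i. z i + z i)"
    using End_kn_add[OF \<Phi> gr_zero_in_carrier gr_zero_in_carrier] by (simp add: z(2) gr_add)
  then have "gr_cls z = gr_cls (\<lambda>_. 0)"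
    unfolding gr_cls_eq_iff using T_minus by fastforce
  then show ?thesis using z(2) gr_zero by simp
qed

lemma gr_carrier_induct [consumes 1, case_names single add]:
  assumes g: "g \<in> carrier R"
    and single: "\<And>k b. b \<in> T k \<Longrightarrow> P (gr_single k b)"
    and add: "\<And>g h. g \<in> carrier R \<Longrightarrow> h \<in> carrier R \<Longrightarrow> P g \<Longrightarrow> P h \<Longrightarrow> P (g \<oplus>\<^bsub>R\<^esub> h)"
  shows "P g"
proof -
  define trunc where "trunc K = gr_cls (\<lambda>i. if i < K then rep (g i) else 0)" for K
  have rep_g: "rep (g i) \<in> T i" for i using gr_carrier_rep(1)[OF g] unfolding graded_def by blast
  have "trunc K \<in> carrier R \<and> P (trunc K)" for K
  proof (induction K)
    case 0
    have "trunc 0 = gr_single 0 0" unfolding trunc_def gr_single_def by simp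
    then show ?case using single[OF T_0] gr_single_in_carrier[OF T_0] by simp
  next
    case (Suc K)
    have "trunc (Suc K) = trunc K \<oplus>\<^bsub>R\<^esub> gr_single K (rep (g K))"
      unfolding trunc_def gr_single_def gr_add by (rule arg_cong[of _ _ gr_cls]) auto
    moreover have "trunc (Suc K) \<in> carrier R"
      unfolding trunc_def using rep_g by (intro gr_cls_in_carrier) (simp add: graded_def)
    ultimately show ?case
      using Suc add[OF _ gr_single_in_carrier[OF rep_g] _ single[OF rep_g]] by simp
  qed
  moreover have "trunc (Suc n) = g"
  proof -
    have "rep (g i) = 0" if "Suc n \<le> i" for i using rep_g T_eq_0_iff[of i "rep (g i)"] that by simp
    then have "trunc (Suc n) = gr_cls (\<lambda>i. rep (g i))" unfolding trunc_def by (intro gr_cls_eqI) simp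
    then show ?thesis using gr_carrier_rep(2)[OF g] by simp
  qed
  ultimately show ?thesis by metis
qed

text \<open>gr B is generated by its degree-0 part and the class of t.\<close>

lemma End_kn_gr_eqI:
  assumes \<Phi>: "\<Phi> \<in> End_kn R (gr_scalar \<iota> t) (gr_t t)" and \<Psi>: "\<Psi> \<in> End_kn R (gr_scalar \<iota> t) (gr_t t)"
    and eq0: "\<And>b. \<Phi> (gr_single 0 b) = \<Psi> (gr_single 0 b)"
  shows "\<Phi> = \<Psi>"
proof (rule extensionalityI[OF End_kn_extensional[OF \<Phi>] End_kn_extensional[OF \<Psi>]])
  have on_single: "\<Phi> (gr_single k (t ^ k * y)) = \<Psi> (gr_single k (t ^ k * y))" for k y
  proof (induction k)
    case (Suc k)
    have "gr_single (Suc k) (t ^ Suc k * y) = gr_t t \<otimes>\<^bsub>R\<^esub> gr_single k (t ^ k * y)"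
      using gr_t_mult_single[OF T_I, of k y] by (simp add: mult.assoc)
    then show ?case
      using Suc End_kn_mult_tau[OF \<Phi>] End_kn_mult_tau[OF \<Psi>] gr_single_in_carrier[OF T_I] by simp
  qed (simp add: eq0)
  fix g assume "g \<in> carrier R"
  then show "\<Phi> g = \<Psi> g"
  proof (induction rule: gr_carrier_induct)
    case (single k b)
    then show ?case using on_single unfolding mem_T_iff by blast
  next
    case (add g h)
    then show ?case using End_kn_add[OF \<Phi>] End_kn_add[OF \<Psi>] by simp
  qed
qed

subsection \<open>Operators on gr B induced by filtered families\<close>

definition filtered_family :: "(nat \<Rightarrow> 'b \<Rightarrow> 'b) \<Rightarrow> bool" where
  "filtered_family E \<longleftrightarrow> (\<forall>i. kn_linear (E i) \<and> (\<forall>y. E i y \<in> T i))"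

definition conv_apply :: "(nat \<Rightarrow> 'b \<Rightarrow> 'b) \<Rightarrow> (nat \<Rightarrow> 'b) \<Rightarrow> nat \<Rightarrow> 'b" where
  "conv_apply E x = (\<lambda>m. \<Sum>i\<le>m. E i (x (m - i)))"

definition gr_op :: "(nat \<Rightarrow> 'b \<Rightarrow> 'b) \<Rightarrow> (nat \<Rightarrow> 'b set) \<Rightarrow> nat \<Rightarrow> 'b set" where
  "gr_op E = (\<lambda>g\<in>carrier R. gr_cls (conv_apply E (\<lambda>i. rep (g i))))"

lemma gamma_eq_gr_op: "gamma t G = gr_op (\<lambda>i. rep (G i))"
  unfolding gamma_def gr_op_def filt_cls_def conv_apply_def ..

lemma filtered_family_kn_linear: "filtered_family E \<Longrightarrow> kn_linear (E i)"
  unfolding filtered_family_def by blast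

lemma filtered_family_range: "filtered_family E \<Longrightarrow> E i y \<in> T i"
  unfolding filtered_family_def by blast

lemma filtered_family_T: "filtered_family E \<Longrightarrow> x \<in> T j \<Longrightarrow> E i x \<in> T (j + i)"
  unfolding filtered_family_def by (blast intro: kn_linear_T)

lemma graded_conv_apply:
  assumes E: "filtered_family E" and x: "graded x"
  shows "graded (conv_apply E x)"
proof -
  have "E i (x (m - i)) \<in> T m" if "i \<le> m" for i m
    using filtered_family_T[OF E, of "x (m - i)" "m - i" i] x that unfolding graded_def by simp
  then show ?thesis unfolding graded_def conv_apply_def by (auto intro: T_sum)
qed

lemma gr_op_gr_cls:
  assumes E: "filtered_family E" and x: "graded x"
  shows "gr_op E (gr_cls x) = gr_cls (conv_apply E x)"
proof -
  have "gr_op E (gr_cls x) = gr_cls (conv_apply E (\<lambda>i. rep (gr_cls x i)))"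
    unfolding gr_op_def using gr_cls_in_carrier[OF x] by simp
  also have "\<dots> = gr_cls (conv_apply E x)"
  proof (rule gr_cls_eqI)
    fix m
    have "E i (rep (gr_cls x (m - i))) - E i (x (m - i)) \<in> T (Suc m)" if "i \<le> m" for i
    proof -
      have "E i (rep (gr_cls x (m - i)) - x (m - i)) \<in> T (Suc (m - i) + i)"
        by (rule filtered_family_T[OF E rep_gr_cls])
      then show ?thesis
        using that by (simp add: kn_linear_diff[OF filtered_family_kn_linear[OF E]])
    qed
    then show "conv_apply E (\<lambda>i. rep (gr_cls x i)) m - conv_apply E x m \<in> T (Suc m)"
      unfolding conv_apply_def by (simp only: sum_subtractf[symmetric]) (rule T_sum, simp)
  qed
  finally show ?thesis .
qed

lemma gr_op_in_carrier: "filtered_family E \<Longrightarrow> g \<in> carrier R \<Longrightarrow> gr_op E g \<in> carrier R"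
  by (elim gr_carrierE) (simp add: gr_op_gr_cls gr_cls_in_carrier graded_conv_apply)

lemma gr_op_cong:
  assumes E: "filtered_family E" and E': "filtered_family E'"
    and diff: "\<And>i y. E i y - E' i y \<in> T (Suc i)"
  shows "gr_op E = gr_op E'"
proof
  fix g
  show "gr_op E g = gr_op E' g"
  proof (cases "g \<in> carrier R")
    case False
    then show ?thesis unfolding gr_op_def by simp
  next
    case True
    then obtain x where x: "graded x" "g = gr_cls x" by (rule gr_carrierE)
    have cong: "E i y - E' i y \<in> T (j + Suc i)" if "y \<in> T j" for i j y
    proof -
      have lin: "kn_linear (E i + - E' i)"
        by (intro kn_linear_add_fun kn_linear_minus_fun filtered_family_kn_linear[OF E]
            filtered_family_kn_linear[OF E'])
      have "(E i + - E' i) y \<in> T (j + Suc i)"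
        by (rule kn_linear_T[OF lin _ that]) (use diff in simp)
      then show ?thesis by simp
    qed
    have "E i (x (m - i)) - E' i (x (m - i)) \<in> T (Suc m)" if "i \<le> m" for i m
      using cong[of "x (m - i)" "m - i" i] x(1) that unfolding graded_def by simp
    then have "conv_apply E x m - conv_apply E' x m \<in> T (Suc m)" for m
      unfolding conv_apply_def by (simp only: sum_subtractf[symmetric]) (rule T_sum, simp)
    then show ?thesis
      unfolding x(2) gr_op_gr_cls[OF E x(1)] gr_op_gr_cls[OF E' x(1)] by (rule gr_cls_eqI)
  qed
qed

lemma gr_op_single_0:
  assumes E: "filtered_family E"
  shows "gr_op E (gr_single 0 b) = gr_cls (\<lambda>m. E m b)"
proof -
  have "conv_apply E (\<lambda>i. if i = 0 then b else 0) = (\<lambda>m. E m b)"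
  proof
    fix m
    have "conv_apply E (\<lambda>i. if i = 0 then b else 0) m = (\<Sum>i\<le>m. if i = m then E i b else 0)"
      unfolding conv_apply_def
      by (rule sum.cong) (auto simp: kn_linear_0[OF filtered_family_kn_linear[OF E]])
    then show "conv_apply E (\<lambda>i. if i = 0 then b else 0) m = E m b" by simp
  qed
  then show ?thesis
    unfolding gr_single_def by (simp add: gr_op_gr_cls[OF E graded_single[OF T_0]])
qed

lemma conv_apply_add:
  "filtered_family E \<Longrightarrow> conv_apply E (\<lambda>i. x i + y i) = (\<lambda>m. conv_apply E x m + conv_apply E y m)"
  unfolding conv_apply_def by (simp add: kn_linear_add[OF filtered_family_kn_linear] sum.distrib)

lemma conv_apply_scalar:
  "filtered_family E \<Longrightarrow> conv_apply E (\<lambda>m. \<iota> c * x m) = (\<lambda>m. \<iota> c * conv_apply E x m)"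
  unfolding conv_apply_def by (simp add: kn_linear_scalar[OF filtered_family_kn_linear] sum_distrib_left)

lemma conv_apply_shift_t:
  assumes E: "filtered_family E"
  shows "conv_apply E (\<lambda>m. if m = 0 then 0 else t * x (m - 1))
    = (\<lambda>m. if m = 0 then 0 else t * conv_apply E x (m - 1))"
    (is "conv_apply E ?tx = _")
proof
  fix m
  note lin = filtered_family_kn_linear[OF E]
  show "conv_apply E ?tx m = (if m = 0 then 0 else t * conv_apply E x (m - 1))"
  proof (cases m)
    case (Suc k)
    have "conv_apply E ?tx m = (\<Sum>i\<le>k. E i (?tx (Suc k - i)))"
      unfolding conv_apply_def Suc sum.atMost_Suc by (simp add: kn_linear_0[OF lin])
    also have "\<dots> = (\<Sum>i\<le>k. t * E i (x (k - i)))"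
    proof (rule sum.cong[OF refl])
      fix i assume "i \<in> {..k}"
      then have "Suc k - i = Suc (k - i)" by (simp add: Suc_diff_le)
      then show "E i (?tx (Suc k - i)) = t * E i (x (k - i))" by (simp add: kn_linear_t[OF lin])
    qed
    finally show ?thesis unfolding conv_apply_def Suc by (simp add: sum_distrib_left)
  qed (simp add: conv_apply_def kn_linear_0[OF lin])
qed

lemma gr_op_in_End_kn:
  assumes E: "filtered_family E"
  shows "gr_op E \<in> End_kn R (gr_scalar \<iota> t) (gr_t t)"
proof -
  have "gr_op E (g \<oplus>\<^bsub>R\<^esub> h) = gr_op E g \<oplus>\<^bsub>R\<^esub> gr_op E h"
    if "g \<in> carrier R" and "h \<in> carrier R" for g h
    using that by (elim gr_carrierE)
      (simp add: gr_add gr_op_gr_cls[OF E] graded_add conv_apply_add[OF E])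
  moreover have "gr_op E (gr_scalar \<iota> t c \<otimes>\<^bsub>R\<^esub> g) = gr_scalar \<iota> t c \<otimes>\<^bsub>R\<^esub> gr_op E g"
    if "g \<in> carrier R" for c g
    using that by (elim gr_carrierE)
      (simp add: gr_scalar_eq_single gr_single_0_mult gr_op_gr_cls[OF E] graded_scalar
        graded_conv_apply[OF E] conv_apply_scalar[OF E])
  moreover have "gr_op E (gr_t t \<otimes>\<^bsub>R\<^esub> g) = gr_t t \<otimes>\<^bsub>R\<^esub> gr_op E g" if "g \<in> carrier R" for g
    using that by (elim gr_carrierE)
      (simp add: gr_t_mult gr_op_gr_cls[OF E] graded_shift_t graded_conv_apply[OF E]
        conv_apply_shift_t[OF E])
  moreover have "gr_op E \<in> carrier R \<rightarrow> carrier R" using gr_op_in_carrier[OF E] by blast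
  moreover have "gr_op E \<in> extensional (carrier R)" unfolding gr_op_def by simp
  ultimately show ?thesis unfolding End_kn_def by (intro CollectI conjI ballI allI) simp_all
qed

definition conv_comm :: "(nat \<Rightarrow> 'b) \<Rightarrow> (nat \<Rightarrow> 'b \<Rightarrow> 'b) \<Rightarrow> nat \<Rightarrow> 'b \<Rightarrow> 'b" where
  "conv_comm a E = (\<lambda>q y. \<Sum>j\<le>q. bracket (a j) (E (q - j)) y)"

lemma filtered_family_conv_comm:
  assumes E: "filtered_family E" and a: "graded a"
  shows "filtered_family (conv_comm a E)"
proof -
  have "kn_linear (conv_comm a E q)" for q
    unfolding conv_comm_def
    by (intro kn_linear_sum_fun kn_linear_bracket filtered_family_kn_linear[OF E])
  moreover have "conv_comm a E q y \<in> T q" for q y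
  proof -
    have "bracket (a j) (E (q - j)) y \<in> T q" if "j \<le> q" for j
    proof -
      have aj: "a j \<in> T j" using a unfolding graded_def by blast
      have "a j * E (q - j) y \<in> T (j + (q - j))"
        by (rule T_mult[OF aj filtered_family_range[OF E]])
      moreover have "E (q - j) (a j * y) \<in> T (j + (q - j))"
        by (rule filtered_family_T[OF E T_mult_right[OF aj]])
      ultimately show ?thesis using that unfolding bracket_def by (simp add: T_diff)
    qed
    then show ?thesis unfolding conv_comm_def by (auto intro: T_sum)
  qed
  ultimately show ?thesis unfolding filtered_family_def by blast
qed

lemma conv_comm_Diff: "(\<And>i. E i \<in> Diff (Suc m)) \<Longrightarrow> conv_comm a E q \<in> Diff m"
  unfolding conv_comm_def by (intro Diff_sum Diff_Suc_bracket)

lemma conv_comm_Diff_0: "(\<And>i. E i \<in> Diff 0) \<Longrightarrow> conv_comm a E = (\<lambda>_ _. 0)"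
  unfolding conv_comm_def by (simp add: Diff_0_bracket)

text \<open>Both sides are sums over the triples j + i + l = m of the terms
  a j * E i (x l) and E i (a j * x l).\<close>

lemma conv_apply_commutator:
  assumes E: "filtered_family E"
  shows "(\<Sum>j\<le>m. a j * conv_apply E x (m - j)) - conv_apply E (\<lambda>p. \<Sum>j\<le>p. a j * x (p - j)) m
       = conv_apply (conv_comm a E) x m"
proof -
  have left: "(\<Sum>j\<le>m. a j * conv_apply E x (m - j))
      = (\<Sum>q\<le>m. \<Sum>j\<le>q. a j * E (q - j) (x (m - q)))"
  proof -
    have "(\<Sum>j\<le>m. a j * conv_apply E x (m - j)) = (\<Sum>j\<le>m. \<Sum>i\<le>m - j. a j * E i (x (m - j - i)))"
      unfolding conv_apply_def by (simp add: sum_distrib_left)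
    also have "\<dots> = (\<Sum>q\<le>m. \<Sum>j\<le>q. a j * E (q - j) (x (m - j - (q - j))))"
      by (rule sum_atMost_triangle)
    finally show ?thesis by (simp add: diff_diff_left)
  qed
  have right: "conv_apply E (\<lambda>p. \<Sum>j\<le>p. a j * x (p - j)) m
      = (\<Sum>q\<le>m. \<Sum>j\<le>q. E (q - j) (a j * x (m - q)))"
  proof -
    have "conv_apply E (\<lambda>p. \<Sum>j\<le>p. a j * x (p - j)) m
        = (\<Sum>i\<le>m. \<Sum>j\<le>m - i. E i (a j * x (m - i - j)))"
      unfolding conv_apply_def by (simp add: kn_linear_sum[OF filtered_family_kn_linear[OF E]])
    also have "\<dots> = (\<Sum>q\<le>m. \<Sum>i\<le>q. E i (a (q - i) * x (m - i - (q - i))))"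
      by (rule sum_atMost_triangle)
    also have "\<dots> = (\<Sum>q\<le>m. \<Sum>j\<le>q. E (q - j) (a j * x (m - (q - j) - j)))"
      by (rule sum.cong[OF refl], rule sum_atMost_reflect[where H="\<lambda>i j. E i (a j * x (m - i - j))"])
    finally show ?thesis by (simp add: diff_diff_left)
  qed
  show ?thesis
    unfolding left right by (simp add: conv_apply_def conv_comm_def bracket_def sum_subtractf)
qed

lemma lie_comm_gr_op:
  assumes E: "filtered_family E" and a: "graded a"
  shows "lie_comm R (gr_cls a) (gr_op E) = gr_op (conv_comm a E)"
proof
  fix g
  show "lie_comm R (gr_cls a) (gr_op E) g = gr_op (conv_comm a E) g"
  proof (cases "g \<in> carrier R")
    case False
    then show ?thesis unfolding lie_comm_def gr_op_def by simp
  next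
    case True
    then obtain x where x: "graded x" "g = gr_cls x" by (rule gr_carrierE)
    have "lie_comm R (gr_cls a) (gr_op E) g
        = (gr_cls a \<otimes>\<^bsub>R\<^esub> gr_op E (gr_cls x)) \<ominus>\<^bsub>R\<^esub> gr_op E (gr_cls a \<otimes>\<^bsub>R\<^esub> gr_cls x)"
      unfolding lie_comm_def using True x(2) by simp
    also have "\<dots> = gr_cls (\<lambda>m. (\<Sum>j\<le>m. a j * conv_apply E x (m - j))
        - conv_apply E (\<lambda>p. \<Sum>j\<le>p. a j * x (p - j)) m)"
      using a x(1) by (simp add: gr_op_gr_cls[OF E] gr_mult graded_conv_apply[OF E] graded_conv
          gr_minus)
    also have "\<dots> = gr_op (conv_comm a E) g"
      unfolding conv_apply_commutator[OF E] x(2)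
      by (rule gr_op_gr_cls[OF filtered_family_conv_comm[OF E a] x(1), symmetric])
    finally show ?thesis .
  qed
qed

lemma gr_op_zero: "gr_op (\<lambda>_ _. 0) = (\<lambda>g\<in>carrier R. \<zero>\<^bsub>R\<^esub>)"
  unfolding gr_op_def gr_zero conv_apply_def by simp

lemma iter_comm_snoc_gr_op:
  assumes E: "filtered_family E" and f: "f \<in> carrier R"
  obtains a where "graded a"
    and "iter_comm R (fs @ [f]) (gr_op E) = iter_comm R fs (gr_op (conv_comm a E))"
proof -
  obtain a where "graded a" "f = gr_cls a" using f by (rule gr_carrierE)
  then show ?thesis using that E by (simp add: iter_comm_snoc lie_comm_gr_op)
qed

lemma gr_op_diff_ops_order:
  assumes "filtered_family E" and "\<And>i. E i \<in> Diff m"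
  shows "gr_op E \<in> diff_ops_order R (gr_scalar \<iota> t) (gr_t t) m"
  using assms
proof (induction m arbitrary: E)
  case 0
  have "iter_comm R [f] (gr_op E) = (\<lambda>x\<in>carrier R. \<zero>\<^bsub>R\<^esub>)" if f: "f \<in> carrier R" for f
  proof -
    obtain a where "iter_comm R [f] (gr_op E) = iter_comm R [] (gr_op (conv_comm a E))"
      using iter_comm_snoc_gr_op[OF "0.prems"(1) f, of "[]"] by auto
    then show ?thesis by (simp add: iter_comm_def conv_comm_Diff_0[OF "0.prems"(2)] gr_op_zero)
  qed
  then show ?case
    unfolding diff_ops_order_def using gr_op_in_End_kn[OF "0.prems"(1)]
    by (auto simp: length_Suc_conv)
next
  case (Suc m)
  have snoc: "iter_comm R (fs @ [f]) (gr_op E) = (\<lambda>x\<in>carrier R. \<zero>\<^bsub>R\<^esub>)"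
    if fs: "set fs \<subseteq> carrier R" "length fs = Suc m" and f: "f \<in> carrier R" for fs f
  proof -
    obtain a where a: "graded a"
      and eq: "iter_comm R (fs @ [f]) (gr_op E) = iter_comm R fs (gr_op (conv_comm a E))"
      using iter_comm_snoc_gr_op[OF Suc.prems(1) f] .
    have "gr_op (conv_comm a E) \<in> diff_ops_order R (gr_scalar \<iota> t) (gr_t t) m"
      by (rule Suc.IH[OF filtered_family_conv_comm[OF Suc.prems(1) a] conv_comm_Diff[OF Suc.prems(2)]])
    then show ?thesis unfolding eq diff_ops_order_def using fs by blast
  qed
  show ?case
    unfolding diff_ops_order_def
  proof (intro CollectI conjI allI impI)
    fix fs assume fs: "set fs \<subseteq> carrier R" "length fs = Suc (Suc m)"
    then obtain fs' f where "fs = fs' @ [f]" by (cases fs rule: rev_cases) auto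
    with fs show "iter_comm R fs (gr_op E) = (\<lambda>x\<in>carrier R. \<zero>\<^bsub>R\<^esub>)" using snoc by auto
  qed (rule gr_op_in_End_kn[OF Suc.prems(1)])
qed

abbreviation tD :: "nat \<Rightarrow> ('b \<Rightarrow> 'b) set" where
  "tD i \<equiv> filt_D \<iota> t i"

lemma mem_tD_iff: "X \<in> tD i \<longleftrightarrow> (\<exists>d\<in>Diff_ops. X = (\<lambda>x. t ^ i * d x))"
  unfolding filt_D_def diff_ops_type_ring by auto

lemma tD_T: "X \<in> tD i \<Longrightarrow> X x \<in> T i"
  unfolding mem_tD_iff using T_I by auto

sublocale tD: subgroup_filtration "filt_D \<iota> t"
proof
  show "0 \<in> tD i" for i
    unfolding mem_tD_iff by (rule bexI[of _ 0]) (simp_all add: zero_in_Diff_ops fun_eq_iff)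
  show "X - Y \<in> tD i" if XY: "X \<in> tD i" "Y \<in> tD i" for X Y i
  proof -
    obtain d e where "d \<in> Diff_ops" "e \<in> Diff_ops" "X = (\<lambda>x. t ^ i * d x)" "Y = (\<lambda>x. t ^ i * e x)"
      using XY unfolding mem_tD_iff by blast
    then show ?thesis
      unfolding mem_tD_iff by (intro bexI[of _ "d - e"] Diff_ops_diff) (auto simp: right_diff_distrib)
  qed
  show "tD (Suc i) \<subseteq> tD i" for i
  proof
    fix X assume "X \<in> tD (Suc i)"
    then obtain d where d: "d \<in> Diff_ops" "X = (\<lambda>x. t ^ Suc i * d x)"
      unfolding mem_tD_iff by blast
    then have "X = (\<lambda>x. t ^ i * (t ^ 1 * d x))"
      by (simp only: mult.assoc[symmetric] power_one_right power_Suc2)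
    then show "X \<in> tD i"
      unfolding mem_tD_iff using Diff_ops_scale_t_power[OF d(1), of 1]
      by (intro bexI[of _ "\<lambda>x. t ^ 1 * d x"]) simp_all
  qed
qed

lemma tD_kn_linear: "X \<in> tD i \<Longrightarrow> kn_linear X"
  unfolding mem_tD_iff by (auto intro: kn_linear_scale_t_power Diff_ops_kn_linear)

lemma tD_filtered_family: "(\<And>i. X i \<in> tD i) \<Longrightarrow> filtered_family X"
  unfolding filtered_family_def using tD_kn_linear tD_T by blast

lemma gr_D_rep:
  assumes "G \<in> gr_D \<iota> t"
  shows "rep (G i) \<in> tD i" and "G = filt_cls tD (\<lambda>i. rep (G i))"
  using tD.gr_pieces_rep assms unfolding gr_D_def by blast+

lemma gr_D_common_order:
  assumes G: "G \<in> gr_D \<iota> t"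
  shows "\<exists>M. \<forall>i. rep (G i) \<in> Diff M"
proof -
  obtain d where d: "\<And>i. d i \<in> Diff_ops" "\<And>i. rep (G i) = (\<lambda>x. t ^ i * d i x)"
    using gr_D_rep(1)[OF G] unfolding mem_tD_iff by metis
  obtain M where M: "\<And>i. i \<le> n \<Longrightarrow> d i \<in> Diff M"
    using Diff_ops_common_order[of n d] d(1) by blast
  have "rep (G i) \<in> Diff M" for i
  proof (cases "i \<le> n")
    case True
    then show ?thesis unfolding d(2) by (rule Diff_scale_t_power[OF M])
  next
    case False
    then show ?thesis unfolding d(2) using zero_in_Diff t_power_eq_0[of i] by (simp add: zero_fun_def)
  qed
  then show ?thesis by blast
qed

theorem gamma_in_diff_ops:
  assumes G: "G \<in> gr_D \<iota> t"
  shows "gamma t G \<in> diff_ops R (gr_scalar \<iota> t) (gr_t t)"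
proof -
  obtain M where M: "\<And>i. rep (G i) \<in> Diff M" using gr_D_common_order[OF G] by blast
  have "filtered_family (\<lambda>i. rep (G i))" by (rule tD_filtered_family[OF gr_D_rep(1)[OF G]])
  then have "gr_op (\<lambda>i. rep (G i)) \<in> diff_ops_order R (gr_scalar \<iota> t) (gr_t t) M"
    using M by (rule gr_op_diff_ops_order)
  then show ?thesis unfolding gamma_eq_gr_op diff_ops_def by blast
qed

lemma gamma_filt_cls:
  assumes X: "\<And>i. X i \<in> tD i"
  shows "gamma t (filt_cls tD X) = gr_op X"
proof -
  have "rep (filt_cls tD X i) \<in> tD i" for i
    using gr_D_rep(1) tD.filt_cls_in_gr_pieces[OF X] unfolding gr_D_def by blast
  moreover have "rep (filt_cls tD X i) y - X i y \<in> T (Suc i)" for i y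
    using tD_T[OF tD.rep_filt_cls] by simp
  ultimately show ?thesis
    unfolding gamma_eq_gr_op by (intro gr_op_cong tD_filtered_family X) auto
qed

subsection \<open>Saturation\<close>

definition tD_saturated :: bool where
  "tD_saturated \<longleftrightarrow> (\<forall>d\<in>Diff_ops. (\<forall>x. d x \<in> T 1) \<longrightarrow> (\<exists>e\<in>Diff_ops. d = (\<lambda>x. t * e x)))"

lemma gamma_single_0: "G \<in> gr_D \<iota> t \<Longrightarrow> gamma t G (gr_single 0 b) = gr_cls (\<lambda>m. rep (G m) b)"
  unfolding gamma_eq_gr_op by (rule gr_op_single_0[OF tD_filtered_family[OF gr_D_rep(1)]])

lemma inj_gamma_imp_tD_saturated:
  assumes inj: "inj_on (gamma t) (gr_D \<iota> t)"
  shows tD_saturated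
  unfolding tD_saturated_def
proof (intro ballI impI)
  fix d assume d: "d \<in> Diff_ops" and dT: "\<forall>x. d x \<in> T 1"
  define X where "X i = (if i = 0 then d else 0)" for i :: nat
  have "d \<in> tD 0" using d unfolding mem_tD_iff by (intro bexI[of _ d]) simp_all
  then have X: "X i \<in> tD i" for i unfolding X_def using tD.zero_mem by simp
  have Z: "(\<lambda>_. 0) i \<in> tD i" for i :: nat by (rule tD.zero_mem)
  have "gamma t (filt_cls tD X) = gamma t (filt_cls tD (\<lambda>_. 0))"
    unfolding gamma_filt_cls[OF X] gamma_filt_cls[OF Z]
    by (rule gr_op_cong[OF tD_filtered_family[OF X] tD_filtered_family[OF Z]]) (use dT in \<open>simp add: X_def\<close>)
  then have "filt_cls tD X = filt_cls tD (\<lambda>_. 0)"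
    by (rule inj_onD[OF inj]) (use tD.filt_cls_in_gr_pieces X Z in \<open>simp_all add: gr_D_def\<close>)
  then have "d \<in> tD 1" unfolding tD.filt_cls_eq_iff X_def by (metis diff_zero One_nat_def)
  then show "\<exists>e\<in>Diff_ops. d = (\<lambda>x. t * e x)" unfolding mem_tD_iff by simp
qed

lemma surj_gamma_lift_leading_term:
  assumes surj: "gamma t ` gr_D \<iota> t = diff_ops R (gr_scalar \<iota> t) (gr_t t)"
    and d: "d \<in> Diff_ops" and dT: "\<And>x. d x \<in> T k"
  shows "\<exists>e\<in>Diff_ops. \<forall>x. d x - t ^ k * e x \<in> T (Suc k)"
proof -
  from d obtain M where M: "d \<in> Diff M" unfolding Diff_ops_iff ..
  define E where "E i = (if i = k then d else 0)" for i
  have E: "filtered_family E"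
    unfolding filtered_family_def E_def using Diff_kn_linear[OF M] kn_linear_0_fun dT by auto
  have "gr_op E \<in> diff_ops_order R (gr_scalar \<iota> t) (gr_t t) M"
    by (rule gr_op_diff_ops_order[OF E]) (simp add: E_def M zero_in_Diff)
  then have "gr_op E \<in> gamma t ` gr_D \<iota> t" unfolding surj diff_ops_def by blast
  then obtain G where G: "G \<in> gr_D \<iota> t" "gamma t G = gr_op E" by (metis imageE)
  obtain e where e: "e \<in> Diff_ops" "rep (G k) = (\<lambda>x. t ^ k * e x)"
    using gr_D_rep(1)[OF G(1), of k] unfolding mem_tD_iff by blast
  have "gr_cls (\<lambda>m. E m x) = gr_cls (\<lambda>m. rep (G m) x)" for x
    using gamma_single_0[OF G(1), of x] gr_op_single_0[OF E, of x] G(2) by simp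
  then have "E k x - rep (G k) x \<in> T (Suc k)" for x by (simp only: gr_cls_eq_iff)
  then have "d x - t ^ k * e x \<in> T (Suc k)" for x by (simp add: E_def e(2))
  with e(1) show ?thesis by blast
qed

lemma surj_gamma_imp_tD_saturated:
  assumes surj: "gamma t ` gr_D \<iota> t = diff_ops R (gr_scalar \<iota> t) (gr_t t)"
  shows tD_saturated
proof -
  have "\<forall>d\<in>Diff_ops. (\<forall>x. d x \<in> T k) \<longrightarrow> (\<exists>e\<in>Diff_ops. d = (\<lambda>x. t * e x))"
    if "1 \<le> k" "k \<le> Suc n" for k
    using that(2,1)
  proof (induction k rule: inc_induct)
    case base
    show ?case
    proof (intro ballI impI)
      fix d :: "'b \<Rightarrow> 'b" assume "\<forall>x. d x \<in> T (Suc n)"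
      then have "d = (\<lambda>x. t * 0 x)" using T_eq_0_iff[of "Suc n"] by (simp add: fun_eq_iff)
      then show "\<exists>e\<in>Diff_ops. d = (\<lambda>x. t * e x)" using zero_in_Diff_ops by blast
    qed
  next
    case (step k)
    show ?case
    proof (intro ballI impI)
      fix d assume d: "d \<in> Diff_ops" and dT: "\<forall>x. d x \<in> T k"
      obtain e where e: "e \<in> Diff_ops" "\<And>x. d x - t ^ k * e x \<in> T (Suc k)"
        using surj_gamma_lift_leading_term[OF surj d] dT by blast
      have "d - (\<lambda>x. t ^ k * e x) \<in> Diff_ops"
        by (rule Diff_ops_diff[OF d Diff_ops_scale_t_power[OF e(1)]])
      then obtain e' where e': "e' \<in> Diff_ops" "d - (\<lambda>x. t ^ k * e x) = (\<lambda>x. t * e' x)"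
        using step.IH e(2) by auto
      have "d = (\<lambda>x. t * (e' + (\<lambda>x. t ^ (k - 1) * e x)) x)"
      proof
        fix x
        have "t ^ k = t * t ^ (k - 1)" using step.prems by (simp flip: power_Suc)
        then show "d x = t * (e' + (\<lambda>x. t ^ (k - 1) * e x)) x"
          using fun_cong[OF e'(2), of x] by (simp add: distrib_left mult.assoc algebra_simps)
      qed
      moreover have "e' + (\<lambda>x. t ^ (k - 1) * e x) \<in> Diff_ops"
        by (rule Diff_ops_add[OF e'(1) Diff_ops_scale_t_power[OF e(1)]])
      ultimately show "\<exists>e\<in>Diff_ops. d = (\<lambda>x. t * e x)" by blast
    qed
  qed
  from this[of 1] show ?thesis unfolding tD_saturated_def by simp
qed

text \<open>Multiplication by t^(n-m) maps t^m B / t^(m+1) B injectively (under flatness)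
  into t^n B \<subseteq> B; this turns the degree-m component of an operator on gr B, restricted
  to degree 0, into an operator on B.\<close>

definition component_op :: "nat \<Rightarrow> ((nat \<Rightarrow> 'b set) \<Rightarrow> nat \<Rightarrow> 'b set) \<Rightarrow> 'b \<Rightarrow> 'b" where
  "component_op m \<Phi> = (\<lambda>b. t ^ (n - m) * rep (\<Phi> (gr_single 0 b) m))"

lemma t_power_rep_gr_cls: "m \<le> n \<Longrightarrow> t ^ (n - m) * rep (gr_cls x m) = t ^ (n - m) * x m"
  by (rule T_Suc_annihilated_eq[OF _ rep_gr_cls])

lemma bracket_component_op:
  assumes \<Phi>: "\<Phi> \<in> carrier R \<rightarrow> carrier R" and m: "m \<le> n"
  shows "bracket f (component_op m \<Phi>) = component_op m (lie_comm R (gr_single 0 f) \<Phi>)"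
proof
  fix b
  have single_in: "gr_single 0 c \<in> carrier R" for c by (rule gr_single_in_carrier[OF T_0])
  define y where "y c i = rep (\<Phi> (gr_single 0 c) i)" for c i
  have y: "graded (y c)" "\<Phi> (gr_single 0 c) = gr_cls (y c)" for c
    unfolding y_def using gr_carrier_rep \<Phi> single_in by blast+
  have "lie_comm R (gr_single 0 f) \<Phi> (gr_single 0 b)
      = (gr_single 0 f \<otimes>\<^bsub>R\<^esub> \<Phi> (gr_single 0 b)) \<ominus>\<^bsub>R\<^esub> \<Phi> (gr_single 0 (f * b))"
    unfolding lie_comm_def using single_in by (simp add: gr_single_0_mult_single)
  also have "\<dots> = gr_cls (\<lambda>i. f * y b i - y (f * b) i)"
    unfolding y(2) by (simp add: gr_single_0_mult y(1) gr_minus)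
  finally show "bracket f (component_op m \<Phi>) b = component_op m (lie_comm R (gr_single 0 f) \<Phi>) b"
    unfolding bracket_def component_op_def y_def[symmetric]
    by (simp add: t_power_rep_gr_cls[OF m] right_diff_distrib t_power_left_commute)
qed

lemma foldr_bracket_component_op:
  assumes \<Phi>: "\<Phi> \<in> carrier R \<rightarrow> carrier R" and m: "m \<le> n"
  shows "foldr bracket fs (component_op m \<Phi>) = component_op m (iter_comm R (map (gr_single 0) fs) \<Phi>)"
proof (induction fs)
  case (Cons f fs)
  have "iter_comm R fs' \<Phi> \<in> carrier R \<rightarrow> carrier R" if "set fs' \<subseteq> carrier R" for fs'
    using that
  proof (induction fs')
    case (Cons f' fs')
    then show ?case
      unfolding iter_comm_def lie_comm_def by (auto intro!: gr_minus_closed gr_mult_closed)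
  qed (simp add: iter_comm_def \<Phi>)
  moreover have "set (map (gr_single 0) fs) \<subseteq> carrier R" using gr_single_in_carrier[OF T_0] by auto
  ultimately show ?case
    using Cons bracket_component_op[OF _ m] by (simp add: iter_comm_def)
qed (simp add: iter_comm_def)

lemma component_op_kn_linear:
  assumes \<Phi>: "\<Phi> \<in> End_kn R (gr_scalar \<iota> t) (gr_t t)" and m: "m \<le> n"
  shows "kn_linear (component_op m \<Phi>)"
proof -
  have single_in: "gr_single 0 c \<in> carrier R" for c by (rule gr_single_in_carrier[OF T_0])
  define y where "y c i = rep (\<Phi> (gr_single 0 c) i)" for c i
  have y: "graded (y c)" "\<Phi> (gr_single 0 c) = gr_cls (y c)" for c
    unfolding y_def using gr_carrier_rep End_kn_closed[OF \<Phi> single_in] by blast+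
  have comp: "component_op m \<Phi> c = t ^ (n - m) * y c m" for c
    unfolding component_op_def y_def ..
  have "\<Phi> (gr_single 0 (b + c)) = gr_cls (\<lambda>i. y b i + y c i)" for b c
    using End_kn_add[OF \<Phi> single_in single_in] by (simp add: gr_single_add y(2) gr_add)
  then have "component_op m \<Phi> (b + c) = component_op m \<Phi> b + component_op m \<Phi> c" for b c
    using t_power_rep_gr_cls[OF m] unfolding component_op_def y_def by (simp add: distrib_left)
  moreover have "\<Phi> (gr_single 0 (\<iota> c * b)) = gr_cls (\<lambda>i. \<iota> c * y b i)" for c b
    using End_kn_scalar[OF \<Phi> single_in]
    by (simp add: gr_scalar_eq_single gr_single_0_mult_single gr_single_0_mult y)
  then have "component_op m \<Phi> (\<iota> c * b) = \<iota> c * component_op m \<Phi> b" for c b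
    using t_power_rep_gr_cls[OF m] unfolding component_op_def y_def
    by (simp add: t_power_left_commute)
  moreover have "component_op m \<Phi> (t * b) = t * component_op m \<Phi> b" for b
  proof -
    have "gr_single 0 (t * b) = \<zero>\<^bsub>R\<^esub>"
      unfolding gr_single_def gr_zero by (intro gr_cls_eqI) (simp add: T_mult_t)
    then have "component_op m \<Phi> (t * b) = 0"
      using End_kn_gr_zero[OF \<Phi>] t_power_rep_gr_cls[OF m, of "\<lambda>_. 0"]
      unfolding component_op_def gr_zero by simp
    moreover have "t * component_op m \<Phi> b = 0"
      using T_Suc_annihilated[OF m T_mult_t[of "y b m" m]] y(1)
      unfolding comp graded_def by (simp add: t_power_left_commute[of t])
    ultimately show ?thesis by simp
  qed
  ultimately show ?thesis unfolding kn_linear_def additive_def by blast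
qed

lemma component_op_Diff:
  assumes \<Delta>: "\<Delta> \<in> diff_ops_order R (gr_scalar \<iota> t) (gr_t t) M" and m: "m \<le> n"
  shows "component_op m \<Delta> \<in> Diff M"
proof -
  have End: "\<Delta> \<in> End_kn R (gr_scalar \<iota> t) (gr_t t)" using \<Delta> unfolding diff_ops_order_def by blast
  then have "\<Delta> \<in> carrier R \<rightarrow> carrier R" unfolding End_kn_def by blast
  moreover have "set (map (gr_single 0) fs) \<subseteq> carrier R" for fs
    using gr_single_in_carrier[OF T_0] by auto
  ultimately have "foldr bracket fs (component_op m \<Delta>) = component_op m (\<lambda>x\<in>carrier R. \<zero>\<^bsub>R\<^esub>)"
    if "length fs = Suc M" for fs
    using \<Delta> that foldr_bracket_component_op[OF _ m] unfolding diff_ops_order_def by simp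
  moreover have "component_op m (\<lambda>x\<in>carrier R. \<zero>\<^bsub>R\<^esub>) = 0"
    using t_power_rep_gr_cls[OF m, of "\<lambda>_. 0"] gr_single_in_carrier[OF T_0]
    unfolding component_op_def gr_zero by (simp add: fun_eq_iff)
  ultimately show ?thesis unfolding Diff_def using component_op_kn_linear[OF End m] by simp
qed

end

section \<open>Flatness of gr B\<close>

lemma tensor_kn_carrier: "a \<in> carrier (tensor_kn n) \<longleftrightarrow> (\<forall>i>n. a i = 0)"
  by (simp add: tensor_kn_def)

lemma tensor_kn_add: "a \<oplus>\<^bsub>tensor_kn n\<^esub> b = (\<lambda>i. a i + b i)"
  by (simp add: tensor_kn_def)

lemma tensor_kn_monom_mult:
  "(\<lambda>i. if i = k then c else 0) \<otimes>\<^bsub>tensor_kn n\<^esub> a = (\<lambda>m. if k \<le> m \<and> m \<le> n then c * a (m - k) else 0)"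
proof
  fix m
  have "(\<Sum>i\<le>m. (if i = k then c else 0) * a (m - i)) = (if k \<le> m then c * a (m - k) else 0)"
    by (simp add: if_distrib[of "\<lambda>u. u * _"] sum.delta cong: if_cong)
  then show "((\<lambda>i. if i = k then c else 0) \<otimes>\<^bsub>tensor_kn n\<^esub> a) m
      = (if k \<le> m \<and> m \<le> n then c * a (m - k) else 0)"
    by (simp add: tensor_kn_def)
qed

lemma t_kn_mult: "t_kn n \<otimes>\<^bsub>tensor_kn n\<^esub> a = (\<lambda>m. if 1 \<le> m \<and> m \<le> n then a (m - 1) else 0)"
proof -
  have t_kn: "t_kn n = (\<lambda>i. if i = 1 then (if 1 \<le> n then 1 else 0) else 0)"
    unfolding t_kn_def by auto
  show ?thesis unfolding t_kn tensor_kn_monom_mult by (auto simp: fun_eq_iff)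
qed

lemma tensor_kn_eq_monom_mult:
  assumes "a \<in> carrier (tensor_kn n)" and "\<And>i. i < n \<Longrightarrow> a i = 0"
  shows "(\<lambda>i. if i = n then 1 else 0) \<otimes>\<^bsub>tensor_kn n\<^esub> (\<lambda>i. if i = 0 then a n else 0) = a"
  using assms unfolding tensor_kn_monom_mult tensor_kn_carrier
  by (auto simp: fun_eq_iff) (metis linorder_neqE_nat)

locale flat_kn_algebra = kn_algebra +
  assumes gr_t_mult_injective:
    "j < n \<Longrightarrow> b \<in> tpow t j \<Longrightarrow> t * b \<in> tpow t (Suc (Suc j)) \<Longrightarrow> b \<in> tpow t (Suc j)"
begin

lemma T_cancel_t_power: "i + j \<le> n \<Longrightarrow> x \<in> T j \<Longrightarrow> t ^ i * x \<in> T (Suc (i + j)) \<Longrightarrow> x \<in> T (Suc j)"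
proof (induction i arbitrary: j x)
  case (Suc i)
  have "t ^ Suc i * x = t ^ i * (t * x)" by (simp only: power_Suc2 mult.assoc)
  then have "t ^ i * (t * x) \<in> T (Suc (i + Suc j))" using Suc.prems(3) by simp
  then have "t * x \<in> T (Suc (Suc j))" using Suc.IH Suc.prems(1) T_mult_t[OF Suc.prems(2)] by simp
  then show ?case using gr_t_mult_injective Suc.prems(1,2) by simp
qed simp

end

locale gr_iso_tensor_kn = kn_algebra \<iota> t n for \<iota> :: "'k::field \<Rightarrow> 'b::ring_1" and t n +
  fixes \<psi> :: "(nat \<Rightarrow> 'b set) \<Rightarrow> nat \<Rightarrow> 'a::comm_ring_1"
  assumes hom: "\<psi> \<in> ring_hom (gr_ring t) (tensor_kn n)"
    and bij: "bij_betw \<psi> (carrier (gr_ring t)) (carrier (tensor_kn n))"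
    and \<psi>_gr_t: "\<psi> (gr_t t) = t_kn n"
begin

lemma \<psi>_zero: "\<psi> \<zero>\<^bsub>R\<^esub> = (\<lambda>_. 0)"
proof -
  have "\<zero>\<^bsub>R\<^esub> \<oplus>\<^bsub>R\<^esub> \<zero>\<^bsub>R\<^esub> = \<zero>\<^bsub>R\<^esub>" unfolding gr_zero gr_add by simp
  then have double: "\<psi> \<zero>\<^bsub>R\<^esub> = (\<lambda>i. \<psi> \<zero>\<^bsub>R\<^esub> i + \<psi> \<zero>\<^bsub>R\<^esub> i)"
    using ring_hom_add[OF hom gr_zero_in_carrier gr_zero_in_carrier] by (simp only: tensor_kn_add)
  show ?thesis
  proof
    fix i
    have "\<psi> \<zero>\<^bsub>R\<^esub> i = \<psi> \<zero>\<^bsub>R\<^esub> i + \<psi> \<zero>\<^bsub>R\<^esub> i" using fun_cong[OF double, of i] by (simp only:)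
    then show "\<psi> \<zero>\<^bsub>R\<^esub> i = 0" by (simp only: add_cancel_right_right)
  qed
qed

lemma \<psi>_gr_single_t_power: "k \<le> n \<Longrightarrow> \<psi> (gr_single k (t ^ k)) = (\<lambda>i. if i = k then 1 else 0)"
proof (induction k)
  case 0
  have "gr_single 0 (t ^ 0) = \<one>\<^bsub>R\<^esub>"
    unfolding power_0 gr_single_def filt_cls_def by (simp add: gr_ring_def)
  then show ?case using ring_hom_one[OF hom] by (simp add: tensor_kn_def)
next
  case (Suc k)
  have "gr_single (Suc k) (t ^ Suc k) = gr_t t \<otimes>\<^bsub>R\<^esub> gr_single k (t ^ k)"
    using gr_t_mult_single[OF t_power_in_T] by simp
  then have "\<psi> (gr_single (Suc k) (t ^ Suc k)) = t_kn n \<otimes>\<^bsub>tensor_kn n\<^esub> \<psi> (gr_single k (t ^ k))"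
    using ring_hom_mult[OF hom gr_t_in_carrier gr_single_in_carrier[OF t_power_in_T]] \<psi>_gr_t
    by simp
  then show ?case using Suc by (auto simp: t_kn_mult fun_eq_iff)
qed

text \<open>In A[t]/(t^(n+1)) the annihilator of t consists of the multiples of t^n; pulled
  back along \<psi>, an element of gr B killed by the class of t is a multiple of the class of
  t^n in degree n, and so vanishes below degree n.\<close>

lemma gr_t_annihilator:
  assumes g: "g \<in> carrier R" and tg: "gr_t t \<otimes>\<^bsub>R\<^esub> g = \<zero>\<^bsub>R\<^esub>" and i: "i < n"
  shows "rep (g i) \<in> T (Suc i)"
proof -
  define a where "a = \<psi> g"
  have a: "a \<in> carrier (tensor_kn n)" unfolding a_def by (rule ring_hom_closed[OF hom g])
  have "t_kn n \<otimes>\<^bsub>tensor_kn n\<^esub> a = \<psi> (gr_t t \<otimes>\<^bsub>R\<^esub> g)"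
    using ring_hom_mult[OF hom gr_t_in_carrier g] \<psi>_gr_t unfolding a_def by simp
  also have "\<dots> = (\<lambda>_. 0)" using tg \<psi>_zero by simp
  finally have ta: "t_kn n \<otimes>\<^bsub>tensor_kn n\<^esub> a = (\<lambda>_. 0)" .
  then have a_low: "a j = 0" if "j < n" for j
    using fun_cong[OF ta, of "Suc j"] that unfolding t_kn_mult by simp
  define c where "c = (\<lambda>j::nat. if j = 0 then a n else 0)"
  have "c \<in> carrier (tensor_kn n)" unfolding c_def tensor_kn_carrier by simp
  then obtain h where h: "h \<in> carrier R" "\<psi> h = c"
    using bij_betw_imp_surj_on[OF bij] by (metis imageE)
  have "\<psi> (gr_single n (t ^ n) \<otimes>\<^bsub>R\<^esub> h) = \<psi> g"
    using ring_hom_mult[OF hom gr_single_in_carrier[OF t_power_in_T] h(1)]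
      \<psi>_gr_single_t_power[of n] tensor_kn_eq_monom_mult[OF a a_low] h(2)
    unfolding a_def c_def by simp
  then have "g = gr_single n (t ^ n) \<otimes>\<^bsub>R\<^esub> h"
    using inj_onD[OF bij_betw_imp_inj_on[OF bij] _ g
        gr_mult_closed[OF gr_single_in_carrier[OF t_power_in_T] h(1)]]
    by simp
  moreover obtain x where "graded x" "h = gr_cls x" using h(1) by (rule gr_carrierE)
  ultimately have "g = gr_cls (\<lambda>m. if n \<le> m then t ^ n * x (m - n) else 0)"
    by (simp add: gr_single_mult[OF t_power_in_T])
  then show ?thesis
    using rep_gr_cls[of "\<lambda>m. if n \<le> m then t ^ n * x (m - n) else 0" i] i by simp
qed

sublocale flat_kn_algebra
proof
  fix j b assume j: "j < n" and b: "b \<in> T j" and tb: "t * b \<in> T (Suc (Suc j))"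
  have "gr_single (Suc j) (t * b) = \<zero>\<^bsub>R\<^esub>"
    unfolding gr_single_def gr_zero by (intro gr_cls_eqI) (simp add: tb)
  then have "gr_t t \<otimes>\<^bsub>R\<^esub> gr_single j b = \<zero>\<^bsub>R\<^esub>" by (simp add: gr_t_mult_single[OF b])
  then have r: "rep (gr_single j b j) \<in> T (Suc j)"
    using gr_t_annihilator[OF gr_single_in_carrier[OF b]] j by blast
  have "rep (gr_single j b j) - b \<in> T (Suc j)"
    using rep_gr_cls[of "\<lambda>i. if i = j then b else 0" j] unfolding gr_single_def by simp
  from T_diff[OF r this] show "b \<in> T (Suc j)" by simp
qed

end

context flat_kn_algebra
begin

lemma tD_saturated_imp_inj_gamma:
  assumes sat: tD_saturated
  shows "inj_on (gamma t) (gr_D \<iota> t)"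
proof (rule inj_onI)
  fix G G' assume G: "G \<in> gr_D \<iota> t" and G': "G' \<in> gr_D \<iota> t" and eq: "gamma t G = gamma t G'"
  have "rep (G m) - rep (G' m) \<in> tD (Suc m)" for m
  proof (cases "m \<le> n")
    case True
    obtain d d' where d: "d \<in> Diff_ops" "rep (G m) = (\<lambda>x. t ^ m * d x)"
      and d': "d' \<in> Diff_ops" "rep (G' m) = (\<lambda>x. t ^ m * d' x)"
      using gr_D_rep(1)[OF G, of m] gr_D_rep(1)[OF G', of m] unfolding mem_tD_iff by blast
    have "(d - d') b \<in> T 1" for b
    proof -
      have "gr_cls (\<lambda>m. rep (G m) b) = gr_cls (\<lambda>m. rep (G' m) b)"
        unfolding gamma_single_0[OF G, symmetric] gamma_single_0[OF G', symmetric] eq ..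
      then have "rep (G m) b - rep (G' m) b \<in> T (Suc m)" unfolding gr_cls_eq_iff by blast
      then have "t ^ m * (d b - d' b) \<in> T (Suc (m + 0))"
        unfolding d(2) d'(2) by (simp add: right_diff_distrib)
      then show ?thesis using T_cancel_t_power[of m 0] True by simp
    qed
    then obtain e where e: "e \<in> Diff_ops" "d - d' = (\<lambda>x. t * e x)"
      using sat Diff_ops_diff[OF d(1) d'(1)] unfolding tD_saturated_def by blast
    have "rep (G m) - rep (G' m) = (\<lambda>x. t ^ Suc m * e x)"
      using fun_cong[OF e(2)] unfolding d(2) d'(2)
      by (simp add: fun_eq_iff mult.assoc t_power_left_commute[of t m] right_diff_distrib[symmetric])
    then show ?thesis unfolding mem_tD_iff using e(1) by blast
  next
    case False
    then have "n < m" by simp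
    then have "rep (G m) x = 0" "rep (G' m) x = 0" for x
      using tD_T[OF gr_D_rep(1)[OF G]] tD_T[OF gr_D_rep(1)[OF G']] T_eq_0_iff by blast+
    then have "rep (G m) - rep (G' m) = 0" by (simp add: fun_eq_iff)
    then show ?thesis using tD.zero_mem by simp
  qed
  then show "G = G'"
    using gr_D_rep(2)[OF G] gr_D_rep(2)[OF G'] tD.filt_cls_eq_iff by metis
qed

lemma tD_saturated_dvd_t_power:
  assumes sat: tD_saturated
  shows "k \<le> n \<Longrightarrow> d \<in> Diff_ops \<Longrightarrow> (\<And>x. d x \<in> T k) \<Longrightarrow> \<exists>e\<in>Diff_ops. d = (\<lambda>x. t ^ k * e x)"
proof (induction k arbitrary: d)
  case (Suc k)
  obtain e where e: "e \<in> Diff_ops" "d = (\<lambda>x. t ^ k * e x)"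
    using Suc.IH[of d] Suc.prems T_SucD by auto
  have "e x \<in> T 1" for x
    using T_cancel_t_power[of k 0 "e x"] Suc.prems(1) Suc.prems(3)[of x] unfolding e(2) by simp
  then obtain e' where e': "e' \<in> Diff_ops" "e = (\<lambda>x. t * e' x)"
    using sat e(1) unfolding tD_saturated_def by blast
  have "d = (\<lambda>x. t ^ Suc k * e' x)"
    unfolding e(2) e'(2) by (simp add: mult.assoc t_power_left_commute[of t k])
  then show ?case using e'(1) by blast
qed auto

lemma tD_saturated_lift_component:
  assumes sat: tD_saturated and \<Delta>M: "\<Delta> \<in> diff_ops_order R (gr_scalar \<iota> t) (gr_t t) M"
  shows "\<exists>e\<in>Diff_ops. \<forall>b. t ^ m * e b - rep (\<Delta> (gr_single 0 b) m) \<in> T (Suc m)"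
proof -
  have End: "\<Delta> \<in> End_kn R (gr_scalar \<iota> t) (gr_t t)" using \<Delta>M unfolding diff_ops_order_def by blast
  define y where "y b = rep (\<Delta> (gr_single 0 b) m)" for b
  have y: "y b \<in> T m" for b
    using gr_carrier_rep(1)[OF End_kn_closed[OF End gr_single_in_carrier[OF T_0]]]
    unfolding y_def graded_def by blast
  show ?thesis
    unfolding y_def[symmetric]
  proof (cases "m \<le> n")
    case True
    have "component_op m \<Delta> x \<in> T n" for x
      using T_mult_t_power[OF y[of x], of "n - m"] True unfolding component_op_def y_def by simp
    moreover have "component_op m \<Delta> \<in> Diff_ops"
      unfolding Diff_ops_iff using component_op_Diff[OF \<Delta>M True] by blast
    ultimately obtain e where e: "e \<in> Diff_ops" "component_op m \<Delta> = (\<lambda>x. t ^ n * e x)"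
      using tD_saturated_dvd_t_power[OF sat le_refl] by blast
    have "t ^ m * e b - y b \<in> T (Suc m)" for b
    proof (rule T_cancel_t_power[of "n - m"])
      show "t ^ m * e b - y b \<in> T m" using T_diff[OF T_I y] .
      have "t ^ (n - m) * (t ^ m * e b - y b) = t ^ n * e b - component_op m \<Delta> b"
        using True unfolding component_op_def y_def
        by (simp add: right_diff_distrib mult.assoc[symmetric] power_add[symmetric])
      then show "t ^ (n - m) * (t ^ m * e b - y b) \<in> T (Suc (n - m + m))" using e(2) by simp
    qed (use True in simp)
    then show "\<exists>e\<in>Diff_ops. \<forall>b. t ^ m * e b - y b \<in> T (Suc m)" using e(1) by blast
  next
    case False
    then have "y b = 0" for b using y T_eq_0_iff[of m "y b"] by simp
    then show "\<exists>e\<in>Diff_ops. \<forall>b. t ^ m * e b - y b \<in> T (Suc m)"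
      by (intro bexI[of _ 0]) (simp_all add: zero_in_Diff_ops)
  qed
qed

lemma tD_saturated_imp_surj_gamma:
  assumes sat: tD_saturated and \<Delta>: "\<Delta> \<in> diff_ops R (gr_scalar \<iota> t) (gr_t t)"
  shows "\<Delta> \<in> gamma t ` gr_D \<iota> t"
proof -
  obtain M where \<Delta>M: "\<Delta> \<in> diff_ops_order R (gr_scalar \<iota> t) (gr_t t) M"
    using \<Delta> unfolding diff_ops_def by blast
  have End: "\<Delta> \<in> End_kn R (gr_scalar \<iota> t) (gr_t t)" using \<Delta>M unfolding diff_ops_order_def by blast
  obtain e where e: "\<And>m. e m \<in> Diff_ops"
    "\<And>m b. t ^ m * e m b - rep (\<Delta> (gr_single 0 b) m) \<in> T (Suc m)"
    using tD_saturated_lift_component[OF sat \<Delta>M] by metis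
  define X where "X m = (\<lambda>x. t ^ m * e m x)" for m
  have X: "X m \<in> tD m" for m unfolding X_def mem_tD_iff using e(1) by blast
  have "gamma t (filt_cls tD X) (gr_single 0 b) = \<Delta> (gr_single 0 b)" for b
  proof -
    have "gamma t (filt_cls tD X) (gr_single 0 b) = gr_cls (\<lambda>m. X m b)"
      unfolding gamma_filt_cls[OF X] by (rule gr_op_single_0[OF tD_filtered_family[OF X]])
    also have "\<dots> = gr_cls (\<lambda>m. rep (\<Delta> (gr_single 0 b) m))"
      unfolding X_def by (rule gr_cls_eqI) (rule e(2))
    also have "\<dots> = \<Delta> (gr_single 0 b)"
      using gr_carrier_rep(2)[OF End_kn_closed[OF End gr_single_in_carrier[OF T_0]]] by simp
    finally show ?thesis .
  qed
  then have "gamma t (filt_cls tD X) = \<Delta>"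
    using End_kn_gr_eqI[OF gr_op_in_End_kn[OF tD_filtered_family[OF X]] End] gamma_filt_cls[OF X]
    by simp
  moreover have "filt_cls tD X \<in> gr_D \<iota> t"
    unfolding gr_D_def by (rule tD.filt_cls_in_gr_pieces[OF X])
  ultimately show ?thesis by blast
qed

theorem inj_gamma_iff_tD_saturated: "inj_on (gamma t) (gr_D \<iota> t) \<longleftrightarrow> tD_saturated"
  using inj_gamma_imp_tD_saturated tD_saturated_imp_inj_gamma by blast

theorem surj_gamma_iff_tD_saturated:
  "gamma t ` gr_D \<iota> t = diff_ops R (gr_scalar \<iota> t) (gr_t t) \<longleftrightarrow> tD_saturated"
  using surj_gamma_imp_tD_saturated tD_saturated_imp_surj_gamma gamma_in_diff_ops by blast

end

theorem lemma9p2: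
  fixes \<iota>A :: "'k::field \<Rightarrow> 'a::comm_ring_1" and \<iota> :: "'k \<Rightarrow> 'b::ring_1"
    and t :: 'b and n :: nat
  assumes "k_algebra_str \<iota>A"
    and "kn_algebra_str \<iota> t n"
    and "gr_iso_tensor \<iota>A \<iota> t n"
  shows "(\<forall>G\<in>gr_D \<iota> t. gamma t G \<in> diff_ops (gr_ring t) (gr_scalar \<iota> t) (gr_t t))
    \<and> (inj_on (gamma t) (gr_D \<iota> t) \<longleftrightarrow>
         gamma t ` gr_D \<iota> t = diff_ops (gr_ring t) (gr_scalar \<iota> t) (gr_t t))"
proof -
  obtain \<psi> :: "(nat \<Rightarrow> 'b set) \<Rightarrow> nat \<Rightarrow> 'a" where
    "\<psi> \<in> ring_hom (gr_ring t) (tensor_kn n)"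
    "bij_betw \<psi> (carrier (gr_ring t)) (carrier (tensor_kn n))" "\<psi> (gr_t t) = t_kn n"
    using assms(3) unfolding gr_iso_tensor_def by blast
  then interpret gr_iso_tensor_kn \<iota> t n \<psi>
    using assms(2) by unfold_locales
  show ?thesis
    using gamma_in_diff_ops inj_gamma_iff_tD_saturated surj_gamma_iff_tD_saturated by blast
qed

end
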